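(* Let $X$ be a noncommutative space embedded in $\mathcal A^m$, $e=\tilde E^j\ast E_j$, with canonical connections $\nabla_i\zeta=\partial_i\zeta-\zeta\ast\partial_ie$ on $TX=\mathcal A^m\ast e$ and $\tilde\nabla_i\xi=\partial_i\xi-\partial_i(e)\ast\xi$ on $\tilde TX=e\ast{}^m\!\mathcal A$, and curvature $\mathcal R_{ij}=-(\partial_ie\ast\partial_je-\partial_je\ast\partial_ie)$. Define $R^l_{kij}=E_k\ast\mathcal R_{ij}\ast\tilde E^l$ and $\tilde R^l_{kij}=-g^{lq}\ast E_q\ast\mathcal R_{ij}\ast\tilde E^p\ast g_{pk}$. Then $$R^l_{kij}=-\partial_j\Gamma^l_{ik}-\Gamma^p_{ik}\ast\Gamma^l_{jp}+\partial_i\Gamma^l_{jk}+\Gamma^p_{jk}\ast\Gamma^l_{ip},$$ $$\tilde R^l_{kij}=-\partial_j\tilde\Gamma^l_{ik}-\tilde\Gamma^l_{jp}\ast\tilde\Gamma^p_{ik}+\partial_i\tilde\Gamma^l_{jk}+\tilde\Gamma^l_{ip}\ast\tilde\Gamma^p_{jk},$$ and $[\nabla_i,\nabla_j]E_k=R^l_{kij}\ast E_l$, $[\tilde\nabla_i,\tilde\nabla_j](E_k)^t=(E_l)^t\ast\tilde R^l_{kij}$.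
   Context: $\mathcal A$ denotes the Moyal algebra: for $U\subset\mathbb R^n$ open with coordinates $t$ and $\hbar$ a formal real indeterminate, $\mathcal A$ is the set of formal power series $\sum_{i\ge0}f_i\hbar^i$ with real smooth coefficients on $U$, with product $(f\ast g)(t)=\lim_{t'\to t}\exp\big(\hbar\sum_{i,j}\theta_{ij}\frac{\partial}{\partial t^i}\frac{\partial}{\partial t'^j}\big)f(t)g(t')$ for a fixed constant real skew-symmetric $\theta$ ($\partial_i=\partial/\partial t^i$ are commuting derivations, acting entrywise on matrices). Matrices over $\mathcal A$ are multiplied using $\ast$; $\mathcal A^m$ row vectors, ${}^m\!\mathcal A$ column vectors. Einstein summation. For $X=(X^1,\dots,X^m)\in\mathcal A^m$, $g_{ij}=\sum_\alpha\partial_iX^\alpha\ast\partial_jX^\alpha$; $X$ is a noncommutative space embedded in $\mathcal A^m$ if $(g_{ij})$ is invertible, inverse $(g^{ij})$. $E_i=\partial_iX$, $(E_i)^t$ its transpose, $\tilde E^i=(E_j)^t\ast g^{ji}$. ${}_c\Gamma_{ijl}=\tfrac12(\partial_ig_{jl}+\partial_jg_{li}-\partial_lg_{ji})$, $\Upsilon_{ijl}=\tfrac12(\partial_i(E_j)\ast(E_l)^t-E_l\ast\partial_i(E_j)^t)$, $\Gamma_{ijl}={}_c\Gamma_{ijl}+\Upsilon_{ijl}$, $\tilde\Gamma_{ijl}={}_c\Gamma_{ijl}-\Upsilon_{ijl}$, $\Gamma_{ij}^k=\Gamma_{ijl}\ast g^{lk}$, $\tilde\Gamma_{ij}^k=g^{kl}\ast\tilde\Gamma_{ijl}$.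 *)

theory Defs
  imports "HOL-Analysis.Analysis"
begin

text \<open>An element of the Moyal algebra is a formal power series sum_k f_k hbar^k,
represented by its coefficient sequence k -> f_k, each f_k a real function on real^'n,
only its restriction to U being relevant (smoothness and equalities are required on U).\<close>

type_synonym 'n moyal = "nat \<Rightarrow> (real^'n \<Rightarrow> real)"

definition pd :: "'n::finite \<Rightarrow> (real^'n \<Rightarrow> real) \<Rightarrow> real^'n \<Rightarrow> real" where
  "pd i f x = deriv (\<lambda>t. f (x + t *\<^sub>R axis i 1)) 0"

fun pds :: "'n::finite list \<Rightarrow> (real^'n \<Rightarrow> real) \<Rightarrow> real^'n \<Rightarrow> real" where
  "pds [] f = f"
| "pds (i # ks) f = pd i (pds ks f)"

definition smooth_on :: "(real^'n::finite) set \<Rightarrow> (real^'n \<Rightarrow> real) \<Rightarrow> bool" where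
  "smooth_on U f \<longleftrightarrow>
     (\<forall>ks. continuous_on U (pds ks f) \<and>
        (\<forall>i. \<forall>x\<in>U. (\<lambda>t. pds ks f (x + t *\<^sub>R axis i 1)) differentiable (at 0)))"

definition moyal_elem :: "(real^'n::finite) set \<Rightarrow> 'n moyal \<Rightarrow> bool" where
  "moyal_elem U a \<longleftrightarrow> (\<forall>k. smooth_on U (a k))"

definition meq :: "(real^'n::finite) set \<Rightarrow> 'n moyal \<Rightarrow> 'n moyal \<Rightarrow> bool" where
  "meq U a b \<longleftrightarrow> (\<forall>k. \<forall>x\<in>U. a k x = b k x)"

definition mzero :: "'n moyal" where "mzero = (\<lambda>k x. 0)"
definition mone :: "'n moyal" where "mone = (\<lambda>k x. if k = 0 then 1 else 0)"
definition madd :: "'n moyal \<Rightarrow> 'n moyal \<Rightarrow> 'n moyal" where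
  "madd a b = (\<lambda>k x. a k x + b k x)"
definition mneg :: "'n moyal \<Rightarrow> 'n moyal" where
  "mneg a = (\<lambda>k x. - a k x)"
definition mdiff :: "'n moyal \<Rightarrow> 'n moyal \<Rightarrow> 'n moyal" where
  "mdiff a b = madd a (mneg b)"
definition mscale :: "real \<Rightarrow> 'n moyal \<Rightarrow> 'n moyal" where
  "mscale c a = (\<lambda>k x. c * a k x)"
definition msum :: "'i set \<Rightarrow> ('i \<Rightarrow> 'n moyal) \<Rightarrow> 'n moyal" where
  "msum I f = (\<lambda>k x. \<Sum>j\<in>I. f j k x)"

definition mpd :: "'n::finite \<Rightarrow> 'n moyal \<Rightarrow> 'n moyal" where
  "mpd i a = (\<lambda>k. pd i (a k))"

text \<open>Moyal product: expansion of
  lim_{t'->t} exp(hbar sum theta_ij d/dt^i d/dt'^j) f(t) g(t'):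
  the hbar^k coefficient is sum over p+q+N=k of
  1/N! sum_{i_1..i_N, j_1..j_N} prod theta_{i_r j_r} (d_{i_1..i_N} f_p)(d_{j_1..j_N} g_q).\<close>
definition mstar :: "real^'n^'n \<Rightarrow> 'n::finite moyal \<Rightarrow> 'n moyal \<Rightarrow> 'n moyal" where
  "mstar \<theta> a b = (\<lambda>k x. \<Sum>p\<le>k. \<Sum>q\<le>k - p.
      (1 / fact (k - p - q)) *
      (\<Sum>ks\<in>{ks. length ks = k - p - q}. \<Sum>js\<in>{js. length js = k - p - q}.
          (\<Prod>r<k - p - q. \<theta> $ (ks ! r) $ (js ! r)) * pds ks (a p) x * pds js (b q) x))"

definition rowcol :: "real^'n^'n \<Rightarrow> ('m::finite \<Rightarrow> 'n::finite moyal) \<Rightarrow> ('m \<Rightarrow> 'n moyal) \<Rightarrow> 'n moyal" where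
  "rowcol \<theta> v w = msum UNIV (\<lambda>\<alpha>. mstar \<theta> (v \<alpha>) (w \<alpha>))"
definition rowmat :: "real^'n^'n \<Rightarrow> ('m::finite \<Rightarrow> 'n::finite moyal) \<Rightarrow> ('m \<Rightarrow> 'p \<Rightarrow> 'n moyal) \<Rightarrow> 'p \<Rightarrow> 'n moyal" where
  "rowmat \<theta> v M = (\<lambda>\<beta>. msum UNIV (\<lambda>\<alpha>. mstar \<theta> (v \<alpha>) (M \<alpha> \<beta>)))"
definition matcol :: "real^'n^'n \<Rightarrow> ('p \<Rightarrow> 'm::finite \<Rightarrow> 'n::finite moyal) \<Rightarrow> ('m \<Rightarrow> 'n moyal) \<Rightarrow> 'p \<Rightarrow> 'n moyal" where
  "matcol \<theta> M w = (\<lambda>\<alpha>. msum UNIV (\<lambda>\<beta>. mstar \<theta> (M \<alpha> \<beta>) (w \<beta>)))"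
definition matmat :: "real^'n^'n \<Rightarrow> ('p \<Rightarrow> 'm::finite \<Rightarrow> 'n::finite moyal) \<Rightarrow> ('m \<Rightarrow> 'q \<Rightarrow> 'n moyal) \<Rightarrow> 'p \<Rightarrow> 'q \<Rightarrow> 'n moyal" where
  "matmat \<theta> A B = (\<lambda>\<alpha> \<gamma>. msum UNIV (\<lambda>\<beta>. mstar \<theta> (A \<alpha> \<beta>) (B \<beta> \<gamma>)))"

text \<open>E_i = partial_i X (a row vector in A^m); its transpose (E_i)^t is the column with the same entries.\<close>
definition Evec :: "('m::finite \<Rightarrow> 'n::finite moyal) \<Rightarrow> 'n \<Rightarrow> 'm \<Rightarrow> 'n moyal" where
  "Evec X i = (\<lambda>\<alpha>. mpd i (X \<alpha>))"

definition metric :: "real^'n^'n \<Rightarrow> ('m::finite \<Rightarrow> 'n::finite moyal) \<Rightarrow> 'n \<Rightarrow> 'n \<Rightarrow> 'n moyal" where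
  "metric \<theta> X i j = msum UNIV (\<lambda>\<alpha>. mstar \<theta> (mpd i (X \<alpha>)) (mpd j (X \<alpha>)))"

definition is_metric_inverse ::
  "(real^'n) set \<Rightarrow> real^'n^'n \<Rightarrow> ('m::finite \<Rightarrow> 'n::finite moyal) \<Rightarrow> ('n \<Rightarrow> 'n \<Rightarrow> 'n moyal) \<Rightarrow> bool" where
  "is_metric_inverse U \<theta> X G \<longleftrightarrow>
     (\<forall>i j. moyal_elem U (G i j)) \<and>
     (\<forall>i j. meq U (matmat \<theta> (metric \<theta> X) G i j) (if i = j then mone else mzero)) \<and>
     (\<forall>i j. meq U (matmat \<theta> G (metric \<theta> X) i j) (if i = j then mone else mzero))"

definition nc_space ::
  "(real^'n) set \<Rightarrow> real^'n^'n \<Rightarrow> ('m::finite \<Rightarrow> 'n::finite moyal) \<Rightarrow> ('n \<Rightarrow> 'n \<Rightarrow> 'n moyal) \<Rightarrow> bool" where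
  "nc_space U \<theta> X G \<longleftrightarrow> (\<forall>\<alpha>. moyal_elem U (X \<alpha>)) \<and> is_metric_inverse U \<theta> X G"

definition Etil :: "real^'n^'n \<Rightarrow> ('m::finite \<Rightarrow> 'n::finite moyal) \<Rightarrow> ('n \<Rightarrow> 'n \<Rightarrow> 'n moyal) \<Rightarrow> 'n \<Rightarrow> 'm \<Rightarrow> 'n moyal" where
  "Etil \<theta> X G i = (\<lambda>\<alpha>. msum UNIV (\<lambda>j. mstar \<theta> (Evec X j \<alpha>) (G j i)))"

definition proj :: "real^'n^'n \<Rightarrow> ('m::finite \<Rightarrow> 'n::finite moyal) \<Rightarrow> ('n \<Rightarrow> 'n \<Rightarrow> 'n moyal) \<Rightarrow> 'm \<Rightarrow> 'm \<Rightarrow> 'n moyal" where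
  "proj \<theta> X G = (\<lambda>\<alpha> \<beta>. msum UNIV (\<lambda>j. mstar \<theta> (Etil \<theta> X G j \<alpha>) (Evec X j \<beta>)))"

definition dproj :: "real^'n^'n \<Rightarrow> ('m::finite \<Rightarrow> 'n::finite moyal) \<Rightarrow> ('n \<Rightarrow> 'n \<Rightarrow> 'n moyal) \<Rightarrow> 'n \<Rightarrow> 'm \<Rightarrow> 'm \<Rightarrow> 'n moyal" where
  "dproj \<theta> X G i = (\<lambda>\<alpha> \<beta>. mpd i (proj \<theta> X G \<alpha> \<beta>))"

definition nabla :: "real^'n^'n \<Rightarrow> ('m::finite \<Rightarrow> 'n::finite moyal) \<Rightarrow> ('n \<Rightarrow> 'n \<Rightarrow> 'n moyal) \<Rightarrow> 'n \<Rightarrow> ('m \<Rightarrow> 'n moyal) \<Rightarrow> 'm \<Rightarrow> 'n moyal" where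
  "nabla \<theta> X G i \<zeta> = (\<lambda>\<beta>. mdiff (mpd i (\<zeta> \<beta>)) (rowmat \<theta> \<zeta> (dproj \<theta> X G i) \<beta>))"

definition nablatil :: "real^'n^'n \<Rightarrow> ('m::finite \<Rightarrow> 'n::finite moyal) \<Rightarrow> ('n \<Rightarrow> 'n \<Rightarrow> 'n moyal) \<Rightarrow> 'n \<Rightarrow> ('m \<Rightarrow> 'n moyal) \<Rightarrow> 'm \<Rightarrow> 'n moyal" where
  "nablatil \<theta> X G i \<xi> = (\<lambda>\<alpha>. mdiff (mpd i (\<xi> \<alpha>)) (matcol \<theta> (dproj \<theta> X G i) \<xi> \<alpha>))"

definition curv :: "real^'n^'n \<Rightarrow> ('m::finite \<Rightarrow> 'n::finite moyal) \<Rightarrow> ('n \<Rightarrow> 'n \<Rightarrow> 'n moyal) \<Rightarrow> 'n \<Rightarrow> 'n \<Rightarrow> 'm \<Rightarrow> 'm \<Rightarrow> 'n moyal" where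
  "curv \<theta> X G i j = (\<lambda>\<alpha> \<beta>. mneg (mdiff (matmat \<theta> (dproj \<theta> X G i) (dproj \<theta> X G j) \<alpha> \<beta>)
                                          (matmat \<theta> (dproj \<theta> X G j) (dproj \<theta> X G i) \<alpha> \<beta>)))"

definition Riem :: "real^'n^'n \<Rightarrow> ('m::finite \<Rightarrow> 'n::finite moyal) \<Rightarrow> ('n \<Rightarrow> 'n \<Rightarrow> 'n moyal) \<Rightarrow> 'n \<Rightarrow> 'n \<Rightarrow> 'n \<Rightarrow> 'n \<Rightarrow> 'n moyal" where
  "Riem \<theta> X G l k i j = rowcol \<theta> (rowmat \<theta> (Evec X k) (curv \<theta> X G i j)) (Etil \<theta> X G l)"

definition Riemtil :: "real^'n^'n \<Rightarrow> ('m::finite \<Rightarrow> 'n::finite moyal) \<Rightarrow> ('n \<Rightarrow> 'n \<Rightarrow> 'n moyal) \<Rightarrow> 'n \<Rightarrow> 'n \<Rightarrow> 'n \<Rightarrow> 'n \<Rightarrow> 'n moyal" where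
  "Riemtil \<theta> X G l k i j = mneg (msum UNIV (\<lambda>q. msum UNIV (\<lambda>p.
       mstar \<theta> (mstar \<theta> (G l q) (rowcol \<theta> (rowmat \<theta> (Evec X q) (curv \<theta> X G i j)) (Etil \<theta> X G p)))
               (metric \<theta> X p k))))"

definition cGamma :: "real^'n^'n \<Rightarrow> ('m::finite \<Rightarrow> 'n::finite moyal) \<Rightarrow> 'n \<Rightarrow> 'n \<Rightarrow> 'n \<Rightarrow> 'n moyal" where
  "cGamma \<theta> X i j l = mscale (1/2)
     (mdiff (madd (mpd i (metric \<theta> X j l)) (mpd j (metric \<theta> X l i))) (mpd l (metric \<theta> X j i)))"

definition Upsilon :: "real^'n^'n \<Rightarrow> ('m::finite \<Rightarrow> 'n::finite moyal) \<Rightarrow> 'n \<Rightarrow> 'n \<Rightarrow> 'n \<Rightarrow> 'n moyal" where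
  "Upsilon \<theta> X i j l = mscale (1/2)
     (mdiff (rowcol \<theta> (\<lambda>\<alpha>. mpd i (Evec X j \<alpha>)) (Evec X l))
            (rowcol \<theta> (Evec X l) (\<lambda>\<alpha>. mpd i (Evec X j \<alpha>))))"

definition Gamma3 :: "real^'n^'n \<Rightarrow> ('m::finite \<Rightarrow> 'n::finite moyal) \<Rightarrow> 'n \<Rightarrow> 'n \<Rightarrow> 'n \<Rightarrow> 'n moyal" where
  "Gamma3 \<theta> X i j l = madd (cGamma \<theta> X i j l) (Upsilon \<theta> X i j l)"
definition Gamma3til :: "real^'n^'n \<Rightarrow> ('m::finite \<Rightarrow> 'n::finite moyal) \<Rightarrow> 'n \<Rightarrow> 'n \<Rightarrow> 'n \<Rightarrow> 'n moyal" where
  "Gamma3til \<theta> X i j l = mdiff (cGamma \<theta> X i j l) (Upsilon \<theta> X i j l)"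

definition Gam :: "real^'n^'n \<Rightarrow> ('m::finite \<Rightarrow> 'n::finite moyal) \<Rightarrow> ('n \<Rightarrow> 'n \<Rightarrow> 'n moyal) \<Rightarrow> 'n \<Rightarrow> 'n \<Rightarrow> 'n \<Rightarrow> 'n moyal" where
  "Gam \<theta> X G k i j = msum UNIV (\<lambda>l. mstar \<theta> (Gamma3 \<theta> X i j l) (G l k))"
definition Gamtil :: "real^'n^'n \<Rightarrow> ('m::finite \<Rightarrow> 'n::finite moyal) \<Rightarrow> ('n \<Rightarrow> 'n \<Rightarrow> 'n moyal) \<Rightarrow> 'n \<Rightarrow> 'n \<Rightarrow> 'n \<Rightarrow> 'n moyal" where
  "Gamtil \<theta> X G k i j = msum UNIV (\<lambda>l. mstar \<theta> (G k l) (Gamma3til \<theta> X i j l))"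

end

theory Submission
  imports Defs "HOL-Library.Function_Algebras"
begin

text \<open>
  The identities are purely algebraic consequences of three facts about the Moyal algebra:
  the Moyal product is associative and unital, and the partial derivatives are commuting
  derivations.

  \<^item> An abstract differential algebra (locale \<open>diff_algebra\<close>) and, inside it, an embedded
    space (locale \<open>embedded_space\<close>): with matrices over the algebra, the projector
    \<open>e = \<tilde>E\<^sup>j E\<^sub>j\<close> is idempotent, \<open>E \<cdot> \<partial>e \<cdot> e = 0\<close>, and the four identities of the theorem
    follow by matrix calculus (\<open>Riemann_Gamma\<close>, \<open>Riemann_dual_Gamma_dual\<close>,
    \<open>nabla_row_commutator\<close>, \<open>nabla_col_commutator\<close>).
  \<^item> The Moyal algebra of smooth series on the open set \<open>U\<close> is such an algebra.  This needs
    smoothness and Schwarz's theorem for iterated partial derivatives, the general Leibniz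
    rule, and the associativity of the Moyal product, proved by expanding both bracketings
    into sums of trilinear differential operators (\<open>bidiff_assoc_graded\<close>).  Restricting
    series to \<open>U\<close> turns equality on \<open>U\<close> into equality (\<open>moyal_diff_algebra\<close>).
\<close>

section \<open>Differential algebras with a carrier\<close>

text \<open>All laws are only required on a carrier
  predicate \<open>elem\<close>: the Moyal product is a ring structure on smooth series only.\<close>

locale diff_algebra =
  fixes elem :: "'a::ab_group_add \<Rightarrow> bool"
    and mult :: "'a \<Rightarrow> 'a \<Rightarrow> 'a" (infixl "\<star>" 70)
    and one :: 'a
    and D :: "'i \<Rightarrow> 'a \<Rightarrow> 'a"
    and half :: "'a \<Rightarrow> 'a"
  assumes elem_add: "elem a \<Longrightarrow> elem b \<Longrightarrow> elem (a + b)"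
    and elem_uminus: "elem a \<Longrightarrow> elem (- a)"
    and elem_zero: "elem 0"
    and elem_mult: "elem a \<Longrightarrow> elem b \<Longrightarrow> elem (a \<star> b)"
    and elem_one: "elem one"
    and elem_D: "elem a \<Longrightarrow> elem (D i a)"
    and elem_half: "elem a \<Longrightarrow> elem (half a)"
    and mult_add_left: "elem a \<Longrightarrow> elem b \<Longrightarrow> elem c \<Longrightarrow> (a + b) \<star> c = a \<star> c + b \<star> c"
    and mult_add_right: "elem a \<Longrightarrow> elem b \<Longrightarrow> elem c \<Longrightarrow> a \<star> (b + c) = a \<star> b + a \<star> c"
    and mult_assoc: "elem a \<Longrightarrow> elem b \<Longrightarrow> elem c \<Longrightarrow> (a \<star> b) \<star> c = a \<star> (b \<star> c)"
    and mult_one_left: "elem a \<Longrightarrow> one \<star> a = a"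
    and mult_one_right: "elem a \<Longrightarrow> a \<star> one = a"
    and D_add: "elem a \<Longrightarrow> elem b \<Longrightarrow> D i (a + b) = D i a + D i b"
    and D_mult: "elem a \<Longrightarrow> elem b \<Longrightarrow> D i (a \<star> b) = D i a \<star> b + a \<star> D i b"
    and D_commute: "elem a \<Longrightarrow> D i (D j a) = D j (D i a)"
    and half_add: "elem a \<Longrightarrow> elem b \<Longrightarrow> half (a + b) = half a + half b"
    and half_twice: "elem a \<Longrightarrow> half a + half a = a"
begin

lemma elem_diff: "elem a \<Longrightarrow> elem b \<Longrightarrow> elem (a - b)"
  using elem_add elem_uminus by (metis diff_conv_add_uminus)

lemma elem_sum: "(\<And>y. y \<in> S \<Longrightarrow> elem (f y)) \<Longrightarrow> elem (sum f S)"
  by (induction S rule: infinite_finite_induct) (auto intro: elem_add elem_zero)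

lemma mult_zero_left: "elem c \<Longrightarrow> 0 \<star> c = 0"
  using mult_add_left[of 0 0 c] elem_zero by simp

lemma mult_zero_right: "elem c \<Longrightarrow> c \<star> 0 = 0"
  using mult_add_right[of c 0 0] elem_zero by simp

lemma mult_uminus_left: "elem a \<Longrightarrow> elem c \<Longrightarrow> (- a) \<star> c = - (a \<star> c)"
  by (rule minus_unique[symmetric])
    (use mult_add_left[of a "- a" c] in \<open>simp add: elem_uminus mult_zero_left\<close>)

lemma mult_uminus_right: "elem a \<Longrightarrow> elem c \<Longrightarrow> c \<star> (- a) = - (c \<star> a)"
  by (rule minus_unique[symmetric])
    (use mult_add_right[of c a "- a"] in \<open>simp add: elem_uminus mult_zero_right\<close>)

lemma mult_diff_left: "elem a \<Longrightarrow> elem b \<Longrightarrow> elem c \<Longrightarrow> (a - b) \<star> c = a \<star> c - b \<star> c"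
  using mult_add_left[of a "- b" c] by (simp add: elem_uminus mult_uminus_left)

lemma mult_diff_right: "elem a \<Longrightarrow> elem b \<Longrightarrow> elem c \<Longrightarrow> c \<star> (a - b) = c \<star> a - c \<star> b"
  using mult_add_right[of c a "- b"] by (simp add: elem_uminus mult_uminus_right)

lemma mult_sum_left:
  "finite S \<Longrightarrow> (\<And>y. y \<in> S \<Longrightarrow> elem (f y)) \<Longrightarrow> elem c \<Longrightarrow> sum f S \<star> c = (\<Sum>y\<in>S. f y \<star> c)"
  by (induction S rule: finite_induct) (auto simp: mult_zero_left mult_add_left elem_sum)

lemma mult_sum_right:
  "finite S \<Longrightarrow> (\<And>y. y \<in> S \<Longrightarrow> elem (f y)) \<Longrightarrow> elem c \<Longrightarrow> c \<star> sum f S = (\<Sum>y\<in>S. c \<star> f y)"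
  by (induction S rule: finite_induct) (auto simp: mult_zero_right mult_add_right elem_sum)

lemma D_zero: "D i 0 = 0"
  using D_add[of 0 0 i] elem_zero by simp

lemma D_uminus: "elem a \<Longrightarrow> D i (- a) = - D i a"
  by (rule minus_unique[symmetric]) (use D_add[of a "- a" i] in \<open>simp add: elem_uminus D_zero\<close>)

lemma D_diff: "elem a \<Longrightarrow> elem b \<Longrightarrow> D i (a - b) = D i a - D i b"
  using D_add[of a "- b" i] by (simp add: elem_uminus D_uminus)

lemma D_sum: "finite S \<Longrightarrow> (\<And>y. y \<in> S \<Longrightarrow> elem (f y)) \<Longrightarrow> D i (sum f S) = (\<Sum>y\<in>S. D i (f y))"
  by (induction S rule: finite_induct) (auto simp: D_zero D_add elem_sum)

text \<open>The unit is a constant: \<open>D one = D (one \<star> one) = 2 D one\<close>.\<close>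

lemma D_one: "D i one = 0"
proof -
  have "D i one = D i (one \<star> one)" using mult_one_left elem_one by simp
  also have "\<dots> = D i one + D i one"
    using D_mult[OF elem_one elem_one] elem_D elem_one mult_one_left mult_one_right by simp
  finally show ?thesis by simp
qed

lemma half_zero: "half 0 = 0"
  using half_add[of 0 0] elem_zero by simp

lemma half_uminus: "elem a \<Longrightarrow> half (- a) = - half a"
  by (rule minus_unique[symmetric]) (use half_add[of a "- a"] in \<open>simp add: elem_uminus half_zero\<close>)

lemma half_diff: "elem a \<Longrightarrow> elem b \<Longrightarrow> half (a - b) = half a - half b"
  using half_add[of a "- b"] by (simp add: elem_uminus half_uminus)

text \<open>Recovering \<open>a\<close> and \<open>b\<close> from half their sum and half their difference; this splits
  the Christoffel symbols into their metric part and their \<open>\<Upsilon>\<close> part.\<close>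

lemma half_sum_add_half_diff: "elem a \<Longrightarrow> elem b \<Longrightarrow> half (a + b) + half (a - b) = a"
  by (simp add: half_add half_diff) (metis add.commute add_diff_cancel diff_add_eq half_twice)

lemma half_sum_diff_half_diff: "elem a \<Longrightarrow> elem b \<Longrightarrow> half (a + b) - half (a - b) = b"
  by (simp add: half_add half_diff) (metis add_diff_cancel_left half_twice)

subsection \<open>Matrices over the algebra\<close>

definition mat_mult :: "('p \<Rightarrow> 'q::finite \<Rightarrow> 'a) \<Rightarrow> ('q \<Rightarrow> 'r \<Rightarrow> 'a) \<Rightarrow> 'p \<Rightarrow> 'r \<Rightarrow> 'a"
    (infixl "\<cdot>" 70) where
  "A \<cdot> B = (\<lambda>x z. \<Sum>y\<in>UNIV. A x y \<star> B y z)"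

definition mat_elem :: "('p \<Rightarrow> 'q \<Rightarrow> 'a) \<Rightarrow> bool" where
  "mat_elem A \<longleftrightarrow> (\<forall>x y. elem (A x y))"

definition mat_D :: "'i \<Rightarrow> ('p \<Rightarrow> 'q \<Rightarrow> 'a) \<Rightarrow> 'p \<Rightarrow> 'q \<Rightarrow> 'a" where
  "mat_D i A = (\<lambda>x y. D i (A x y))"

definition mat_one :: "'p \<Rightarrow> 'p \<Rightarrow> 'a" where
  "mat_one = (\<lambda>x y. if x = y then one else 0)"

definition mat_transp :: "('p \<Rightarrow> 'q \<Rightarrow> 'a) \<Rightarrow> 'q \<Rightarrow> 'p \<Rightarrow> 'a" where
  "mat_transp A = (\<lambda>x y. A y x)"

lemma mat_elem_diff [simp]: "mat_elem A \<Longrightarrow> mat_elem B \<Longrightarrow> mat_elem (A - B)"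
  by (simp add: mat_elem_def elem_diff)

lemma mat_elem_mult [simp]: "mat_elem A \<Longrightarrow> mat_elem B \<Longrightarrow> mat_elem (A \<cdot> B)"
  by (simp add: mat_elem_def mat_mult_def elem_mult elem_sum)

lemma mat_elem_D [simp]: "mat_elem A \<Longrightarrow> mat_elem (mat_D i A)"
  by (simp add: mat_elem_def mat_D_def elem_D)

lemma mat_elem_transp [simp]: "mat_elem A \<Longrightarrow> mat_elem (mat_transp A)"
  by (simp add: mat_elem_def mat_transp_def)

lemma mat_mult_diff_left:
  "mat_elem A \<Longrightarrow> mat_elem B \<Longrightarrow> mat_elem C \<Longrightarrow> (A - B) \<cdot> C = A \<cdot> C - B \<cdot> C"
  unfolding mat_mult_def mat_elem_def by (intro ext) (auto simp: mult_diff_left sum_subtractf)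

lemma mat_mult_diff_right:
  "mat_elem A \<Longrightarrow> mat_elem B \<Longrightarrow> mat_elem C \<Longrightarrow> C \<cdot> (A - B) = C \<cdot> A - C \<cdot> B"
  unfolding mat_mult_def mat_elem_def by (intro ext) (auto simp: mult_diff_right sum_subtractf)

lemma mat_mult_uminus_left: "mat_elem A \<Longrightarrow> mat_elem C \<Longrightarrow> (- A) \<cdot> C = - (A \<cdot> C)"
  unfolding mat_mult_def mat_elem_def by (intro ext) (auto simp: mult_uminus_left sum_negf)

lemma mat_mult_uminus_right: "mat_elem A \<Longrightarrow> mat_elem C \<Longrightarrow> C \<cdot> (- A) = - (C \<cdot> A)"
  unfolding mat_mult_def mat_elem_def by (intro ext) (auto simp: mult_uminus_right sum_negf)

lemma mat_mult_zero_left: "mat_elem C \<Longrightarrow> 0 \<cdot> C = 0"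
  unfolding mat_mult_def mat_elem_def by (intro ext) (auto simp: mult_zero_left)

lemma mat_mult_zero_right: "mat_elem C \<Longrightarrow> C \<cdot> 0 = 0"
  unfolding mat_mult_def mat_elem_def by (intro ext) (auto simp: mult_zero_right)

lemmas mat_mult_distribs =
  mat_mult_diff_left mat_mult_diff_right mat_mult_uminus_left mat_mult_uminus_right

lemma mat_mult_assoc:
  assumes "mat_elem A" "mat_elem B" "mat_elem C"
  shows "A \<cdot> B \<cdot> C = A \<cdot> (B \<cdot> C)"
proof (intro ext)
  fix x w
  have "(A \<cdot> B \<cdot> C) x w = (\<Sum>z\<in>UNIV. \<Sum>y\<in>UNIV. (A x y \<star> B y z) \<star> C z w)"
    using assms unfolding mat_mult_def mat_elem_def by (simp add: mult_sum_left elem_mult)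
  also have "\<dots> = (\<Sum>y\<in>UNIV. \<Sum>z\<in>UNIV. A x y \<star> (B y z \<star> C z w))"
    using assms unfolding mat_elem_def by (subst sum.swap) (simp add: mult_assoc)
  also have "\<dots> = (A \<cdot> (B \<cdot> C)) x w"
    using assms unfolding mat_mult_def mat_elem_def by (simp add: mult_sum_right elem_mult)
  finally show "(A \<cdot> B \<cdot> C) x w = (A \<cdot> (B \<cdot> C)) x w" .
qed

lemma mat_mult_one_left: "mat_elem A \<Longrightarrow> mat_one \<cdot> A = A"
proof (intro ext)
  fix x z assume "mat_elem A"
  then have "\<And>y. mat_one x y \<star> A y z = (if x = y then A x z else 0)"
    unfolding mat_elem_def mat_one_def by (auto simp: mult_one_left mult_zero_left)
  then show "(mat_one \<cdot> A) x z = A x z" unfolding mat_mult_def by simp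
qed

lemma mat_mult_one_right: "mat_elem A \<Longrightarrow> A \<cdot> mat_one = A"
proof (intro ext)
  fix x z assume "mat_elem A"
  then have "\<And>y. A x y \<star> mat_one y z = (if y = z then A x z else 0)"
    unfolding mat_elem_def mat_one_def by (auto simp: mult_one_right mult_zero_right)
  then show "(A \<cdot> mat_one) x z = A x z" unfolding mat_mult_def by simp
qed

lemma mat_D_diff: "mat_elem A \<Longrightarrow> mat_elem B \<Longrightarrow> mat_D i (A - B) = mat_D i A - mat_D i B"
  unfolding mat_D_def mat_elem_def by (intro ext) (auto simp: D_diff)

lemma mat_D_one: "mat_D i mat_one = 0"
  unfolding mat_D_def mat_one_def by (intro ext) (auto simp: D_zero D_one)

lemma mat_D_commute: "mat_elem A \<Longrightarrow> mat_D i (mat_D j A) = mat_D j (mat_D i A)"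
  unfolding mat_D_def mat_elem_def by (intro ext) (auto simp: D_commute)

lemma mat_D_transp: "mat_D i (mat_transp A) = mat_transp (mat_D i A)"
  unfolding mat_D_def mat_transp_def by auto

lemma mat_D_mult: "mat_elem A \<Longrightarrow> mat_elem B \<Longrightarrow> mat_D i (A \<cdot> B) = mat_D i A \<cdot> B + A \<cdot> mat_D i B"
  unfolding mat_D_def mat_mult_def mat_elem_def
  by (intro ext) (simp add: D_sum elem_mult D_mult sum.distrib)

definition jacobian :: "('m \<Rightarrow> 'a) \<Rightarrow> 'i \<Rightarrow> 'm \<Rightarrow> 'a" where
  "jacobian X = (\<lambda>k \<alpha>. D k (X \<alpha>))"

end

section \<open>Embedded noncommutative spaces in a differential algebra\<close>

text \<open>All
  objects of the paper are matrices over the algebra: \<open>E\<close> (rows \<open>E\<^sub>k\<close>), \<open>Edual = E\<^sup>t \<cdot> G\<close>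
  (columns \<open>\<tilde>E\<^sup>i\<close>), the projector \<open>emat = Edual \<cdot> E\<close>, its derivatives \<open>de i\<close>, the
  curvature, and the Christoffel symbols.\<close>

locale embedded_space = diff_algebra elem mult one D half
  for elem :: "'a::ab_group_add \<Rightarrow> bool" and mult (infixl "\<star>" 70) and one
    and D :: "'i::finite \<Rightarrow> 'a \<Rightarrow> 'a" and half +
  fixes X :: "'m::finite \<Rightarrow> 'a" and G :: "'i \<Rightarrow> 'i \<Rightarrow> 'a"
  assumes elem_X: "elem (X \<alpha>)" and mat_elem_G [simp]: "mat_elem G"
    and inverse_left: "jacobian X \<cdot> mat_transp (jacobian X) \<cdot> G = mat_one"
    and inverse_right: "G \<cdot> (jacobian X \<cdot> mat_transp (jacobian X)) = mat_one"
begin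

abbreviation E :: "'i \<Rightarrow> 'm \<Rightarrow> 'a" where "E \<equiv> jacobian X"

definition gmat :: "'i \<Rightarrow> 'i \<Rightarrow> 'a" where "gmat = E \<cdot> mat_transp E"
definition Edual :: "'m \<Rightarrow> 'i \<Rightarrow> 'a" where "Edual = mat_transp E \<cdot> G"
definition Ehat :: "'i \<Rightarrow> 'm \<Rightarrow> 'a" where "Ehat = G \<cdot> E"
definition emat :: "'m \<Rightarrow> 'm \<Rightarrow> 'a" where "emat = Edual \<cdot> E"
definition de :: "'i \<Rightarrow> 'm \<Rightarrow> 'm \<Rightarrow> 'a" where "de i = mat_D i emat"

text \<open>Curvature \<open>\<R>\<^sub>i\<^sub>j\<close>, the Riemann tensors (entry \<open>(k,l)\<close> of \<open>Riemann i j\<close> is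
  \<open>R\<^sup>l\<^sub>k\<^sub>i\<^sub>j\<close>, entry \<open>(l,k)\<close> of \<open>Riemann_dual i j\<close> is \<open>\<tilde>R\<^sup>l\<^sub>k\<^sub>i\<^sub>j\<close>), the Christoffel matrices
  (entry \<open>(k,l)\<close> of \<open>Gamma i\<close> is \<open>\<Gamma>\<^sup>l\<^sub>i\<^sub>k\<close>, entry \<open>(l,k)\<close> of \<open>Gamma_dual i\<close> is \<open>\<tilde>\<Gamma>\<^sup>l\<^sub>i\<^sub>k\<close>) and the
  two connections, acting on the rows resp. columns of a matrix.\<close>

definition curvature :: "'i \<Rightarrow> 'i \<Rightarrow> 'm \<Rightarrow> 'm \<Rightarrow> 'a" where
  "curvature i j = - (de i \<cdot> de j - de j \<cdot> de i)"
definition Riemann :: "'i \<Rightarrow> 'i \<Rightarrow> 'i \<Rightarrow> 'i \<Rightarrow> 'a" where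
  "Riemann i j = E \<cdot> curvature i j \<cdot> Edual"
definition Riemann_dual :: "'i \<Rightarrow> 'i \<Rightarrow> 'i \<Rightarrow> 'i \<Rightarrow> 'a" where
  "Riemann_dual i j = - (G \<cdot> Riemann i j \<cdot> gmat)"
definition Gamma :: "'i \<Rightarrow> 'i \<Rightarrow> 'i \<Rightarrow> 'a" where
  "Gamma i = mat_D i E \<cdot> Edual"
definition Gamma_dual :: "'i \<Rightarrow> 'i \<Rightarrow> 'i \<Rightarrow> 'a" where
  "Gamma_dual i = Ehat \<cdot> mat_transp (mat_D i E)"
definition nabla_row :: "'i \<Rightarrow> ('p \<Rightarrow> 'm \<Rightarrow> 'a) \<Rightarrow> 'p \<Rightarrow> 'm \<Rightarrow> 'a" where
  "nabla_row i A = mat_D i A - A \<cdot> de i"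
definition nabla_col :: "'i \<Rightarrow> ('m \<Rightarrow> 'p \<Rightarrow> 'a) \<Rightarrow> 'm \<Rightarrow> 'p \<Rightarrow> 'a" where
  "nabla_col i B = mat_D i B - de i \<cdot> B"

lemma mat_elem_E [simp]: "mat_elem E"
  by (simp add: jacobian_def mat_elem_def elem_D elem_X)

lemma mat_elem_gmat [simp]: "mat_elem gmat" by (simp add: gmat_def)
lemma mat_elem_Edual [simp]: "mat_elem Edual" by (simp add: Edual_def)
lemma mat_elem_Ehat [simp]: "mat_elem Ehat" by (simp add: Ehat_def)
lemma mat_elem_emat [simp]: "mat_elem emat" by (simp add: emat_def)
lemma mat_elem_de [simp]: "mat_elem (de i)" by (simp add: de_def)
lemma mat_elem_curvature [simp]: "mat_elem (curvature i j)" by (simp add: curvature_def)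
lemma mat_elem_Riemann [simp]: "mat_elem (Riemann i j)" by (simp add: Riemann_def)

subsection \<open>Algebraic identities of the projector\<close>

lemma E_Edual: "E \<cdot> Edual = mat_one"
  using inverse_left by (simp add: Edual_def mat_mult_assoc)

lemma Ehat_Etransp: "Ehat \<cdot> mat_transp E = mat_one"
  using inverse_right by (simp add: Ehat_def mat_mult_assoc)

lemma emat_alt: "emat = mat_transp E \<cdot> Ehat"
  by (simp add: emat_def Edual_def Ehat_def mat_mult_assoc)

lemma E_emat: "E \<cdot> emat = E"
  by (simp add: emat_def mat_mult_assoc[symmetric] E_Edual mat_mult_one_left)

lemma emat_Edual: "emat \<cdot> Edual = Edual"
  by (simp add: emat_def mat_mult_assoc E_Edual mat_mult_one_right)

lemma emat_idem: "emat \<cdot> emat = emat"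
  by (simp add: emat_def mat_mult_assoc[symmetric]) (simp add: mat_mult_assoc E_Edual mat_mult_one_right)

lemma Ehat_emat: "Ehat \<cdot> emat = Ehat"
  by (simp add: emat_alt mat_mult_assoc[symmetric] Ehat_Etransp mat_mult_one_left)

lemma emat_Etransp: "emat \<cdot> mat_transp E = mat_transp E"
  by (simp add: emat_alt mat_mult_assoc Ehat_Etransp mat_mult_one_right)

lemma emat_emat_mult: "mat_elem Z \<Longrightarrow> emat \<cdot> (emat \<cdot> Z) = emat \<cdot> Z"
  by (simp add: mat_mult_assoc[symmetric] emat_idem)

lemma Edual_gmat: "Edual \<cdot> gmat = mat_transp E"
  using inverse_right by (simp add: Edual_def gmat_def mat_mult_assoc mat_mult_one_right)

lemma mat_D_identity:
  "mat_elem A \<Longrightarrow> mat_elem B \<Longrightarrow> A \<cdot> B = C \<Longrightarrow> mat_D i A \<cdot> B + A \<cdot> mat_D i B = mat_D i C"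
  using mat_D_mult by metis

lemma E_de: "E \<cdot> de i = mat_D i E - mat_D i E \<cdot> emat"
  using mat_D_identity[OF mat_elem_E mat_elem_emat E_emat, of i] by (simp add: de_def algebra_simps)

lemma de_Edual: "de j \<cdot> Edual = mat_D j Edual - emat \<cdot> mat_D j Edual"
  using mat_D_identity[OF mat_elem_emat mat_elem_Edual emat_Edual, of j] by (simp add: de_def algebra_simps)

lemma de_split: "de i = de i \<cdot> emat + emat \<cdot> de i"
  using mat_D_identity[OF mat_elem_emat mat_elem_emat emat_idem, of i] by (simp add: de_def)

lemma E_D_Edual: "E \<cdot> mat_D j Edual = - (mat_D j E \<cdot> Edual)"
  using mat_D_identity[OF mat_elem_E mat_elem_Edual E_Edual, of j]
  by (simp add: mat_D_one eq_neg_iff_add_eq_0 add.commute)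

lemma Ehat_de: "Ehat \<cdot> de i = mat_D i Ehat - mat_D i Ehat \<cdot> emat"
  using mat_D_identity[OF mat_elem_Ehat mat_elem_emat Ehat_emat, of i] by (simp add: de_def algebra_simps)

lemma de_Etransp: "de j \<cdot> mat_transp E = mat_transp (mat_D j E) - emat \<cdot> mat_transp (mat_D j E)"
  using mat_D_identity[OF mat_elem_emat mat_elem_transp[OF mat_elem_E] emat_Etransp, of j]
  by (simp add: de_def mat_D_transp algebra_simps)

lemma D_Ehat_Etransp: "mat_D i Ehat \<cdot> mat_transp E = - (Ehat \<cdot> mat_transp (mat_D i E))"
  using mat_D_identity[OF mat_elem_Ehat mat_elem_transp[OF mat_elem_E] Ehat_Etransp, of i]
  by (simp add: mat_D_one mat_D_transp eq_neg_iff_add_eq_0)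

text \<open>The second fundamental form \<open>de\<close> maps the tangent part to the normal part:
  \<open>E \<cdot> de i \<cdot> emat = 0\<close> and \<open>emat \<cdot> de j \<cdot> E\<^sup>t = 0\<close>.\<close>

lemma E_de_emat: "E \<cdot> (de i \<cdot> emat) = 0"
  by (simp add: mat_mult_assoc[symmetric] E_de mat_mult_diff_left) (simp add: mat_mult_assoc emat_idem)

lemma emat_de_Etransp: "emat \<cdot> (de j \<cdot> mat_transp E) = 0"
  by (simp add: de_Etransp mat_mult_diff_right emat_emat_mult)

lemma E_de_de_emat: "E \<cdot> (de i \<cdot> (de j \<cdot> emat)) = E \<cdot> (de i \<cdot> de j)"
proof -
  have "de j \<cdot> emat = de j - emat \<cdot> de j" using de_split[of j] by (simp add: algebra_simps)
  then show ?thesis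
    by (simp add: mat_mult_diff_right mat_mult_assoc[symmetric])
      (simp add: mat_mult_assoc E_de_emat mat_mult_zero_left)
qed

lemma emat_de_de_Etransp: "emat \<cdot> (de i \<cdot> (de j \<cdot> mat_transp E)) = de i \<cdot> (de j \<cdot> mat_transp E)"
proof -
  have "emat \<cdot> de i = de i - de i \<cdot> emat" using de_split[of i] by (simp add: algebra_simps)
  then show ?thesis
    by (simp add: mat_mult_assoc[symmetric]) (simp add: mat_mult_diff_left mat_mult_assoc emat_de_Etransp mat_mult_zero_right)
qed

subsection \<open>Curvature in terms of Christoffel symbols\<close>

lemma E_de_de_Edual:
  "E \<cdot> (de i \<cdot> de j) \<cdot> Edual = mat_D j (Gamma i) - mat_D j (mat_D i E) \<cdot> Edual + Gamma i \<cdot> Gamma j"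
proof -
  have "E \<cdot> (de i \<cdot> de j) \<cdot> Edual = (E \<cdot> de i) \<cdot> (de j \<cdot> Edual)"
    by (simp add: mat_mult_assoc)
  also have "\<dots> = (mat_D i E - mat_D i E \<cdot> emat) \<cdot> (mat_D j Edual - emat \<cdot> mat_D j Edual)"
    by (simp add: E_de de_Edual)
  also have "\<dots> = mat_D i E \<cdot> mat_D j Edual - mat_D i E \<cdot> (emat \<cdot> mat_D j Edual)"
    by (simp add: mat_mult_diff_left mat_mult_diff_right mat_mult_assoc emat_emat_mult algebra_simps)
  also have "mat_D i E \<cdot> mat_D j Edual = mat_D j (Gamma i) - mat_D j (mat_D i E) \<cdot> Edual"
    using mat_D_identity[OF mat_elem_D[OF mat_elem_E] mat_elem_Edual Gamma_def[symmetric], of j]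
    by (simp add: algebra_simps)
  also have "mat_D i E \<cdot> (emat \<cdot> mat_D j Edual) = Gamma i \<cdot> (E \<cdot> mat_D j Edual)"
    by (simp add: Gamma_def emat_def mat_mult_assoc)
  also have "\<dots> = - (Gamma i \<cdot> Gamma j)"
    by (simp add: E_D_Edual mat_mult_uminus_right Gamma_def)
  finally show ?thesis by (metis diff_minus_eq_add)
qed

theorem Riemann_Gamma:
  "Riemann i j = - mat_D j (Gamma i) - Gamma i \<cdot> Gamma j + mat_D i (Gamma j) + Gamma j \<cdot> Gamma i"
proof -
  have "Riemann i j = - (E \<cdot> (de i \<cdot> de j) \<cdot> Edual - E \<cdot> (de j \<cdot> de i) \<cdot> Edual)"
    by (simp add: Riemann_def curvature_def mat_mult_distribs)
  then show ?thesis
    by (simp add: E_de_de_Edual mat_D_commute[of E i j] algebra_simps)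
qed

lemma Ehat_de_de_Etransp:
  "Ehat \<cdot> (de i \<cdot> de j) \<cdot> mat_transp E
     = mat_D i (Gamma_dual j) - Ehat \<cdot> mat_transp (mat_D i (mat_D j E)) + Gamma_dual i \<cdot> Gamma_dual j"
proof -
  have "Ehat \<cdot> (de i \<cdot> de j) \<cdot> mat_transp E = (Ehat \<cdot> de i) \<cdot> (de j \<cdot> mat_transp E)"
    by (simp add: mat_mult_assoc)
  also have "\<dots> = (mat_D i Ehat - mat_D i Ehat \<cdot> emat)
      \<cdot> (mat_transp (mat_D j E) - emat \<cdot> mat_transp (mat_D j E))"
    by (simp add: Ehat_de de_Etransp)
  also have "\<dots> = mat_D i Ehat \<cdot> mat_transp (mat_D j E) - mat_D i Ehat \<cdot> (emat \<cdot> mat_transp (mat_D j E))"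
    by (simp add: mat_mult_diff_left mat_mult_diff_right mat_mult_assoc emat_emat_mult algebra_simps)
  also have "mat_D i Ehat \<cdot> mat_transp (mat_D j E)
      = mat_D i (Gamma_dual j) - Ehat \<cdot> mat_transp (mat_D i (mat_D j E))"
    using mat_D_identity[OF mat_elem_Ehat mat_elem_transp[OF mat_elem_D[OF mat_elem_E]]
        Gamma_dual_def[symmetric], of i]
    by (simp add: algebra_simps mat_D_transp)
  also have "mat_D i Ehat \<cdot> (emat \<cdot> mat_transp (mat_D j E)) = mat_D i Ehat \<cdot> mat_transp E \<cdot> Gamma_dual j"
    by (simp add: Gamma_dual_def emat_alt mat_mult_assoc)
  also have "\<dots> = - (Gamma_dual i \<cdot> Gamma_dual j)"
    by (simp add: D_Ehat_Etransp mat_mult_uminus_left Gamma_dual_def)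
  finally show ?thesis by (metis diff_minus_eq_add)
qed

lemma G_Riemann_gmat: "G \<cdot> Riemann i j \<cdot> gmat = Ehat \<cdot> curvature i j \<cdot> mat_transp E"
  by (simp add: Riemann_def mat_mult_assoc Edual_gmat) (simp add: Ehat_def mat_mult_assoc)

theorem Riemann_dual_Gamma_dual:
  "Riemann_dual i j = - mat_D j (Gamma_dual i) - Gamma_dual j \<cdot> Gamma_dual i
     + mat_D i (Gamma_dual j) + Gamma_dual i \<cdot> Gamma_dual j"
proof -
  have "Riemann_dual i j = Ehat \<cdot> (de i \<cdot> de j) \<cdot> mat_transp E - Ehat \<cdot> (de j \<cdot> de i) \<cdot> mat_transp E"
    by (simp add: Riemann_dual_def G_Riemann_gmat curvature_def mat_mult_distribs)
  then show ?thesis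
    by (simp add: Ehat_de_de_Etransp mat_D_commute[of E i j] algebra_simps)
qed

lemma Riemann_dual_apply:
  "Riemann_dual i j l k = - (\<Sum>q\<in>UNIV. \<Sum>p\<in>UNIV. (G l q \<star> Riemann i j q p) \<star> gmat p k)"
proof -
  have "Riemann_dual i j l k = - (\<Sum>p\<in>UNIV. \<Sum>q\<in>UNIV. (G l q \<star> Riemann i j q p) \<star> gmat p k)"
    using mat_elem_G mat_elem_Riemann mat_elem_gmat
    unfolding Riemann_dual_def mat_mult_def mat_elem_def by (simp add: mult_sum_left elem_mult)
  then show ?thesis by (subst sum.swap) simp
qed

text \<open>Entry \<open>(j,l)\<close> of \<open>Gamma_low i\<close> is \<open>\<partial>\<^sub>iE\<^sub>j \<cdot> E\<^sub>l\<^sup>t = \<Gamma>\<^sub>i\<^sub>j\<^sub>l\<close>; entry \<open>(l,j)\<close> of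
  \<open>Gamma_dual_low i\<close> is \<open>E\<^sub>l \<cdot> \<partial>\<^sub>iE\<^sub>j\<^sup>t = \<tilde>\<Gamma>\<^sub>i\<^sub>j\<^sub>l\<close>.\<close>

definition Gamma_low :: "'i \<Rightarrow> 'i \<Rightarrow> 'i \<Rightarrow> 'a" where
  "Gamma_low i = mat_D i E \<cdot> mat_transp E"
definition Gamma_dual_low :: "'i \<Rightarrow> 'i \<Rightarrow> 'i \<Rightarrow> 'a" where
  "Gamma_dual_low i = E \<cdot> mat_transp (mat_D i E)"

lemma Gamma_raise: "Gamma i = Gamma_low i \<cdot> G"
  by (simp add: Gamma_def Gamma_low_def Edual_def mat_mult_assoc)

lemma Gamma_dual_raise: "Gamma_dual i = G \<cdot> Gamma_dual_low i"
  by (simp add: Gamma_dual_def Gamma_dual_low_def Ehat_def mat_mult_assoc)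

lemma elem_Gamma_low [simp]: "elem (Gamma_low i j l)"
  using mat_elem_mult[OF mat_elem_D[OF mat_elem_E] mat_elem_transp[OF mat_elem_E], of i]
  unfolding Gamma_low_def mat_elem_def by blast

lemma elem_Gamma_dual_low [simp]: "elem (Gamma_dual_low i l j)"
  using mat_elem_mult[OF mat_elem_E mat_elem_transp[OF mat_elem_D[OF mat_elem_E]], of i]
  unfolding Gamma_dual_low_def mat_elem_def by blast

text \<open>Since \<open>\<partial>\<^sub>iE\<^sub>j = \<partial>\<^sub>jE\<^sub>i\<close>, the metric combination
  \<open>\<partial>\<^sub>ig\<^sub>j\<^sub>l + \<partial>\<^sub>jg\<^sub>l\<^sub>i - \<partial>\<^sub>lg\<^sub>j\<^sub>i\<close> equals \<open>\<Gamma>\<^sub>i\<^sub>j\<^sub>l + \<tilde>\<Gamma>\<^sub>i\<^sub>j\<^sub>l\<close>.\<close>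

lemma metric_Christoffel_combination:
  "D i (gmat j l) + D j (gmat l i) - D l (gmat j i) = Gamma_low i j l + Gamma_dual_low i l j"
proof -
  have D_gmat_mat: "mat_D i gmat = Gamma_low i + Gamma_dual_low i" for i
    by (simp add: gmat_def mat_D_mult mat_D_transp Gamma_low_def Gamma_dual_low_def)
  have D_gmat: "D i (gmat j l) = Gamma_low i j l + Gamma_dual_low i j l" for i j l
    using fun_cong[OF fun_cong[OF D_gmat_mat[of i]], of j l] by (simp add: mat_D_def)
  have DE_sym: "D i (E j \<alpha>) = D j (E i \<alpha>)" for i j \<alpha>
    by (simp add: jacobian_def D_commute elem_X)
  have "Gamma_low j l i = Gamma_low l j i" "Gamma_dual_low j l i = Gamma_dual_low i l j"
    "Gamma_dual_low l j i = Gamma_dual_low i j l"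
    by (simp_all add: Gamma_low_def Gamma_dual_low_def mat_mult_def mat_D_def mat_transp_def DE_sym)
  then show ?thesis by (simp add: D_gmat)
qed

subsection \<open>Curvature as the commutator of the connections\<close>

lemma D_de_commute: "mat_D i (de j) = mat_D j (de i)"
  by (simp add: de_def mat_D_commute)

lemma nabla_row_twice:
  "mat_elem A \<Longrightarrow> nabla_row i (nabla_row j A) = mat_D i (mat_D j A) - mat_D i A \<cdot> de j
     - A \<cdot> mat_D i (de j) - mat_D j A \<cdot> de i + A \<cdot> (de j \<cdot> de i)"
  by (simp add: nabla_row_def mat_D_diff mat_D_mult mat_mult_diff_left mat_mult_assoc algebra_simps)

lemma nabla_col_twice:
  "mat_elem B \<Longrightarrow> nabla_col i (nabla_col j B) = mat_D i (mat_D j B) - mat_D i (de j) \<cdot> B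
     - de j \<cdot> mat_D i B - de i \<cdot> mat_D j B + de i \<cdot> (de j \<cdot> B)"
  by (simp add: nabla_col_def mat_D_diff mat_D_mult mat_mult_diff_right algebra_simps)

theorem nabla_row_commutator: "nabla_row i (nabla_row j E) - nabla_row j (nabla_row i E) = Riemann i j \<cdot> E"
proof -
  have "nabla_row i (nabla_row j E) - nabla_row j (nabla_row i E) = E \<cdot> curvature i j"
    by (simp add: nabla_row_twice D_de_commute mat_D_commute[of E i j] curvature_def
        mat_mult_distribs algebra_simps)
  also have "\<dots> = E \<cdot> curvature i j \<cdot> emat"
    by (simp add: curvature_def mat_mult_distribs mat_mult_assoc E_de_de_emat)
  finally show ?thesis by (simp add: Riemann_def emat_def mat_mult_assoc)
qed

theorem nabla_col_commutator:
  "nabla_col i (nabla_col j (mat_transp E)) - nabla_col j (nabla_col i (mat_transp E))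
     = mat_transp E \<cdot> Riemann_dual i j"
proof -
  have "nabla_col i (nabla_col j (mat_transp E)) - nabla_col j (nabla_col i (mat_transp E))
      = - (curvature i j \<cdot> mat_transp E)"
    by (simp add: nabla_col_twice D_de_commute mat_D_commute[of "mat_transp E" i j] curvature_def
        mat_mult_distribs mat_mult_assoc algebra_simps)
  also have "\<dots> = - (emat \<cdot> (curvature i j \<cdot> mat_transp E))"
    by (simp add: curvature_def mat_mult_distribs mat_mult_assoc emat_de_de_Etransp)
  also have "\<dots> = mat_transp E \<cdot> Riemann_dual i j"
    by (simp add: Riemann_dual_def G_Riemann_gmat mat_mult_uminus_right emat_alt mat_mult_assoc)
  finally show ?thesis .
qed

end

section \<open>Partial derivatives\<close>

definition pd_exists :: "(real^'n::finite \<Rightarrow> real) \<Rightarrow> real^'n \<Rightarrow> 'n \<Rightarrow> bool" where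
  "pd_exists f x i \<longleftrightarrow> (\<lambda>t. f (x + t *\<^sub>R axis i 1)) differentiable (at 0)"

lemma pd_exists_DERIV:
  "pd_exists f x i \<Longrightarrow> ((\<lambda>t. f (x + t *\<^sub>R axis i 1)) has_real_derivative pd i f x) (at 0)"
  unfolding pd_exists_def pd_def by (simp add: DERIV_deriv_iff_real_differentiable)

lemma DERIV_pd_exists:
  "((\<lambda>t. f (x + t *\<^sub>R axis i 1)) has_real_derivative D) (at 0) \<Longrightarrow> pd_exists f x i \<and> pd i f x = D"
  unfolding pd_exists_def pd_def using DERIV_imp_deriv real_differentiable_def by blast

lemma pd_exists_add:
  "pd_exists f x i \<Longrightarrow> pd_exists g x i \<Longrightarrow>
    pd_exists (\<lambda>y. f y + g y) x i \<and> pd i (\<lambda>y. f y + g y) x = pd i f x + pd i g x"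
  by (rule DERIV_pd_exists) (intro DERIV_add pd_exists_DERIV)

lemma pd_exists_mult:
  "pd_exists f x i \<Longrightarrow> pd_exists g x i \<Longrightarrow>
    pd_exists (\<lambda>y. f y * g y) x i \<and> pd i (\<lambda>y. f y * g y) x = pd i f x * g x + f x * pd i g x"
  by (rule DERIV_pd_exists) (auto intro!: derivative_eq_intros pd_exists_DERIV)

lemma pd_exists_cmult:
  "pd_exists f x i \<Longrightarrow> pd_exists (\<lambda>y. c * f y) x i \<and> pd i (\<lambda>y. c * f y) x = c * pd i f x"
  by (rule DERIV_pd_exists) (intro DERIV_cmult pd_exists_DERIV)

lemma pd_exists_const: "pd_exists (\<lambda>y. c) x i \<and> pd i (\<lambda>y. c) x = 0"
  by (rule DERIV_pd_exists) simp

lemma pd_exists_sum: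
  "finite S \<Longrightarrow> (\<And>j. j \<in> S \<Longrightarrow> pd_exists (u j) x i) \<Longrightarrow>
    pd_exists (\<lambda>y. \<Sum>j\<in>S. u j y) x i \<and> pd i (\<lambda>y. \<Sum>j\<in>S. u j y) x = (\<Sum>j\<in>S. pd i (u j) x)"
  by (rule DERIV_pd_exists) (intro DERIV_sum pd_exists_DERIV)

lemma pds_const: "pds ks (\<lambda>y. c) = (if ks = [] then (\<lambda>y. c) else (\<lambda>y. 0))"
proof -
  have "pd i (\<lambda>y. c) = (\<lambda>x. 0)" for i :: 'a and c
    using pd_exists_const by blast
  then show ?thesis by (induction ks) auto
qed

lemma pds_append: "pds (ks @ js) f = pds ks (pds js f)"
  by (induction ks) auto

section \<open>Combinatorics of index lists\<close>

text \<open>Iterated derivatives are indexed by lists of directions; a list of booleans of the same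
  length chooses which of the derivatives go to which factor of a product.\<close>

definition len_lists :: "nat \<Rightarrow> 'a list set" where
  "len_lists n = {xs. length xs = n}"

lemma finite_len_lists [simp]: "finite (len_lists n :: 'a::finite list set)"
  unfolding len_lists_def using finite_lists_length_eq[of "UNIV :: 'a set" n] by simp

lemma len_lists_0: "len_lists 0 = {[]}"
  by (auto simp: len_lists_def)

lemma sum_len_lists_Suc:
  "(\<Sum>cs\<in>len_lists (Suc n). F cs) = (\<Sum>cs\<in>len_lists n. F (True # cs)) + (\<Sum>cs\<in>len_lists n. F (False # cs))"
proof -
  have split: "len_lists (Suc n) = Cons True ` len_lists n \<union> Cons False ` len_lists n"
    by (auto simp: len_lists_def length_Suc_conv)
  show ?thesis unfolding split by (subst sum.union_disjoint) (auto simp: sum.reindex)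
qed

fun sel :: "bool list \<Rightarrow> 'a list \<Rightarrow> 'a list" where
  "sel (c # cs) (k # ks) = (if c then k # sel cs ks else sel cs ks)"
| "sel _ _ = []"

fun merge :: "bool list \<Rightarrow> 'a list \<Rightarrow> 'a list \<Rightarrow> 'a list" where
  "merge [] us vs = []"
| "merge (c # cs) us vs = (if c then hd us # merge cs (tl us) vs else hd vs # merge cs us (tl vs))"

definition ntrue :: "bool list \<Rightarrow> nat" where
  "ntrue cs = length (filter id cs)"

lemma ntrue_simps [simp]: "ntrue [] = 0" "ntrue (True # cs) = Suc (ntrue cs)" "ntrue (False # cs) = ntrue cs"
  by (simp_all add: ntrue_def)

lemma ntrue_le: "ntrue cs \<le> length cs"
  by (simp add: ntrue_def)

lemma ntrue_map_Not [simp]: "ntrue (map Not cs) = length cs - ntrue cs"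
  by (induction cs) (auto simp: ntrue_def Suc_diff_le)

lemma sel_len: "length ks = length cs \<Longrightarrow> length (sel cs ks) = ntrue cs"
  by (induction cs arbitrary: ks) (auto simp: length_Suc_conv ntrue_def)

lemma nsel_len: "length ks = length cs \<Longrightarrow> length (sel (map Not cs) ks) = length cs - ntrue cs"
  using sel_len[of ks "map Not cs"] by simp

lemma merge_len: "length (merge cs us vs) = length cs"
  by (induction cs arbitrary: us vs) auto

lemma merge_sel: "length ks = length cs \<Longrightarrow> merge cs (sel cs ks) (sel (map Not cs) ks) = ks"
  by (induction cs arbitrary: ks) (auto simp: length_Suc_conv)

lemma merge_induct [consumes 2]:
  assumes "length us = ntrue cs" and "length vs = length cs - ntrue cs"
    and "P [] [] []"
    and "\<And>cs u us vs. length us = ntrue cs \<Longrightarrow> length vs = length cs - ntrue cs \<Longrightarrow>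
           P cs us vs \<Longrightarrow> P (True # cs) (u # us) vs"
    and "\<And>cs us v vs. length us = ntrue cs \<Longrightarrow> length vs = length cs - ntrue cs \<Longrightarrow>
           P cs us vs \<Longrightarrow> P (False # cs) us (v # vs)"
  shows "P cs us vs"
  using assms(1,2)
proof (induction cs arbitrary: us vs)
  case (Cons c cs)
  show ?case
  proof (cases c)
    case True
    then obtain u us' where "us = u # us'" using Cons.prems by (cases us) auto
    then show ?thesis using Cons True assms(4) by auto
  next
    case False
    then obtain v vs' where "vs = v # vs'" using Cons.prems ntrue_le[of cs] by (cases vs) auto
    then show ?thesis using Cons False assms(5) ntrue_le[of cs] by (auto simp: Suc_diff_le)
  qed
qed (use assms(3) in simp)

lemma sel_merge:
  "length us = ntrue cs \<Longrightarrow> length vs = length cs - ntrue cs \<Longrightarrow> sel cs (merge cs us vs) = us"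
  by (induction cs us vs rule: merge_induct) auto

lemma nsel_merge:
  "length us = ntrue cs \<Longrightarrow> length vs = length cs - ntrue cs \<Longrightarrow> sel (map Not cs) (merge cs us vs) = vs"
  by (induction cs us vs rule: merge_induct) auto

lemma mset_merge:
  "length us = ntrue cs \<Longrightarrow> length vs = length cs - ntrue cs \<Longrightarrow> mset (merge cs us vs) = mset us + mset vs"
  by (induction cs us vs rule: merge_induct) auto

text \<open>Splitting a list and its partner list simultaneously according to the same choice
  vector \<open>cs\<close> is a bijection; summing over a choice vector and a pair of index lists of length
  \<open>M\<close> is summing over the two pairs of pieces.\<close>

lemma sum_split_by_choice:
  "(\<Sum>(ks, js, as, bs, cs)\<in>len_lists M \<times> len_lists M \<times> A \<times> B \<times> len_lists M. F ks js as bs cs)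
   = (\<Sum>(cs, xs, ys, us, ws, as, bs)\<in>(SIGMA cs:len_lists M. len_lists (ntrue cs) \<times> len_lists (ntrue cs)
        \<times> len_lists (M - ntrue cs) \<times> len_lists (M - ntrue cs) \<times> A \<times> B).
       F (merge cs xs us) (merge cs ys ws) as bs cs)"
  by (rule sum.reindex_bij_witness[where
        j = "\<lambda>(ks, js, as, bs, cs). (cs, sel cs ks, sel cs js, sel (map Not cs) ks, sel (map Not cs) js, as, bs)"
        and i = "\<lambda>(cs, xs, ys, us, ws, as, bs). (merge cs xs us, merge cs ys ws, as, bs, cs)"])
    (auto simp: len_lists_def sel_len nsel_len merge_sel sel_merge nsel_merge merge_len)

lemma sum_len_lists_ntrue:
  "(\<Sum>cs\<in>len_lists M. \<phi> (ntrue cs)) = (\<Sum>s\<le>M. of_nat (M choose s) * (\<phi> s :: real))"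
proof (induction M arbitrary: \<phi>)
  case 0
  then show ?case by (simp add: len_lists_0)
next
  case (Suc M)
  have "(\<Sum>cs\<in>len_lists (Suc M). \<phi> (ntrue cs))
      = (\<Sum>s\<le>M. of_nat (M choose s) * \<phi> (Suc s)) + (\<Sum>s\<le>Suc M. of_nat (M choose s) * \<phi> s)"
    using Suc.IH[of "\<lambda>s. \<phi> (Suc s)"] Suc.IH[of \<phi>] by (simp add: sum_len_lists_Suc)
  also have "\<dots> = \<phi> 0 + (\<Sum>s\<le>M. (of_nat (M choose s) + of_nat (M choose Suc s)) * \<phi> (Suc s))"
    by (subst sum.atMost_Suc_shift) (simp add: algebra_simps sum.distrib)
  also have "\<dots> = (\<Sum>s\<le>Suc M. of_nat (Suc M choose s) * \<phi> s)"
    by (subst sum.atMost_Suc_shift) (simp add: algebra_simps)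
  finally show ?case .
qed

fun theta_prod :: "real^'n^'n \<Rightarrow> 'n list \<Rightarrow> 'n list \<Rightarrow> real" where
  "theta_prod \<theta> (k # ks) (j # js) = \<theta> $ k $ j * theta_prod \<theta> ks js"
| "theta_prod \<theta> _ _ = 1"

lemma prod_theta_prod:
  "length ks = N \<Longrightarrow> length js = N \<Longrightarrow> (\<Prod>r<N. \<theta> $ (ks ! r) $ (js ! r)) = theta_prod \<theta> ks js"
proof (induction N arbitrary: ks js)
  case (Suc N)
  then obtain k ks' j js' where "ks = k # ks'" "js = j # js'" by (cases ks; cases js) auto
  then show ?case using Suc by (simp add: prod.lessThan_Suc_shift del: prod.lessThan_Suc)
qed simp

lemma theta_prod_merge:
  assumes "length us = ntrue cs" "length vs = length cs - ntrue cs"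
    and "length ws = ntrue cs" "length zs = length cs - ntrue cs"
  shows "theta_prod \<theta> (merge cs us vs) (merge cs ws zs) = theta_prod \<theta> us ws * theta_prod \<theta> vs zs"
  using assms
proof (induction cs arbitrary: us vs ws zs)
  case (Cons c cs)
  show ?case
  proof (cases c)
    case True
    then obtain u us' w ws' where "us = u # us'" "ws = w # ws'"
      using Cons.prems by (cases us; cases ws) auto
    then show ?thesis using Cons True by auto
  next
    case False
    then obtain v vs' z zs' where "vs = v # vs'" "zs = z # zs'"
      using Cons.prems ntrue_le[of cs] by (cases vs; cases zs) auto
    then show ?thesis using Cons False ntrue_le[of cs] by auto
  qed
qed simp

text \<open>The \<open>\<hbar>\<^sup>k\<close>-coefficient of a Moyal product is a sum over the triples \<open>p + q + N = k\<close>
  (orders of the two factors and number of contracted derivative pairs).\<close>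

definition triples :: "nat \<Rightarrow> (nat \<times> nat \<times> nat) set" where
  "triples k = {(p, q, N). p + q + N = k}"

definition quadruples :: "nat \<Rightarrow> (nat \<times> nat \<times> nat \<times> nat) set" where
  "quadruples k = {(p, q, r, K). p + q + r + K = k}"

lemma finite_triples [simp]: "finite (triples k)"
  by (rule finite_subset[of _ "{..k} \<times> {..k} \<times> {..k}"]) (auto simp: triples_def)

lemma finite_quadruples [simp]: "finite (quadruples k)"
  by (rule finite_subset[of _ "{..k} \<times> {..k} \<times> {..k} \<times> {..k}"]) (auto simp: quadruples_def)

lemma sum_triples: "(\<Sum>p\<le>k. \<Sum>q\<le>k - p. F p q (k - p - q)) = (\<Sum>(p, q, N)\<in>triples k. F p q N)"
proof -
  have "(\<Sum>p\<le>k. \<Sum>q\<le>k - p. F p q (k - p - q)) = (\<Sum>(p, q)\<in>(SIGMA p:{..k}. {..k - p}). F p q (k - p - q))"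
    by (rule sum.Sigma) auto
  also have "\<dots> = (\<Sum>(p, q, N)\<in>triples k. F p q N)"
    by (rule sum.reindex_bij_witness[where i = "\<lambda>(p, q, N). (p, q)" and j = "\<lambda>(p, q). (p, q, k - p - q)"])
      (auto simp: triples_def)
  finally show ?thesis .
qed

text \<open>Nested triple sums, as they arise in \<open>(a \<star> b) \<star> c\<close> and \<open>a \<star> (b \<star> c)\<close>, regrouped by the
  orders \<open>p, q, r\<close> of the three factors and the total number \<open>K\<close> of contractions.\<close>

lemma sum_triples_regroup_left:
  "(\<Sum>(p', r, M)\<in>triples k. \<Sum>(p, q, N)\<in>triples p'. F p q r N M)
     = (\<Sum>(p, q, r, K)\<in>quadruples k. \<Sum>N\<le>K. F p q r N (K - N))"
proof -
  have "(\<Sum>(p', r, M)\<in>triples k. \<Sum>(p, q, N)\<in>triples p'. F p q r N M)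
      = (\<Sum>((p', r, M), (p, q, N))\<in>(SIGMA (p', r, M):triples k. triples p'). F p q r N M)"
    by (simp add: sum.Sigma split_def)
  also have "\<dots> = (\<Sum>((p, q, r, K), N)\<in>(SIGMA (p, q, r, K):quadruples k. {..K}). F p q r N (K - N))"
    by (rule sum.reindex_bij_witness[where j = "\<lambda>((p', r, M), (p, q, N)). ((p, q, r, N + M), N)"
          and i = "\<lambda>((p, q, r, K), N). ((p + q + N, r, K - N), (p, q, N))"])
      (auto simp: triples_def quadruples_def)
  also have "\<dots> = (\<Sum>(p, q, r, K)\<in>quadruples k. \<Sum>N\<le>K. F p q r N (K - N))"
    by (simp add: sum.Sigma split_def)
  finally show ?thesis .
qed

lemma sum_triples_regroup_right:
  "(\<Sum>(p, q', M)\<in>triples k. \<Sum>(q, r, N)\<in>triples q'. F p q r N M)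
     = (\<Sum>(p, q, r, K)\<in>quadruples k. \<Sum>N\<le>K. F p q r N (K - N))"
proof -
  have "(\<Sum>(p, q', M)\<in>triples k. \<Sum>(q, r, N)\<in>triples q'. F p q r N M)
      = (\<Sum>((p, q', M), (q, r, N))\<in>(SIGMA (p, q', M):triples k. triples q'). F p q r N M)"
    by (simp add: sum.Sigma split_def)
  also have "\<dots> = (\<Sum>((p, q, r, K), N)\<in>(SIGMA (p, q, r, K):quadruples k. {..K}). F p q r N (K - N))"
    by (rule sum.reindex_bij_witness[where j = "\<lambda>((p, q', M), (q, r, N)). ((p, q, r, N + M), N)"
          and i = "\<lambda>((p, q, r, K), N). ((p, q + r + N, K - N), (q, r, N))"])
      (auto simp: triples_def quadruples_def)
  also have "\<dots> = (\<Sum>(p, q, r, K)\<in>quadruples k. \<Sum>N\<le>K. F p q r N (K - N))"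
    by (simp add: sum.Sigma split_def)
  finally show ?thesis .
qed

section \<open>The Moyal product through bidifferential operators\<close>

text \<open>\<open>bidiff \<theta> N f g\<close> sums \<open>theta_prod \<theta> as bs\<close> times the derivatives of \<open>f\<close> along \<open>as\<close>
  and of \<open>g\<close> along \<open>bs\<close> over all direction lists of length \<open>N\<close>: it is \<open>N!\<close> times the
  order-\<open>N\<close> term of the exponential defining the Moyal product.\<close>

definition bidiff ::
  "real^'n^'n \<Rightarrow> nat \<Rightarrow> (real^'n::finite \<Rightarrow> real) \<Rightarrow> (real^'n \<Rightarrow> real) \<Rightarrow> real^'n \<Rightarrow> real" where
  "bidiff \<theta> N f g =
     (\<lambda>y. \<Sum>as\<in>len_lists N. \<Sum>bs\<in>len_lists N. theta_prod \<theta> as bs * (pds as f y * pds bs g y))"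

lemma bidiff_apply:
  "bidiff \<theta> N f g y = (\<Sum>as\<in>len_lists N. \<Sum>bs\<in>len_lists N. theta_prod \<theta> as bs * (pds as f y * pds bs g y))"
  by (simp add: bidiff_def)

text \<open>The trilinear operator in which \<open>a\<close> derivative pairs contract \<open>f\<close> with \<open>g\<close>, \<open>b\<close> pairs
  contract \<open>f\<close> with \<open>h\<close> and \<open>c\<close> pairs contract \<open>g\<close> with \<open>h\<close>.  Both bracketings of a nested
  \<open>bidiff\<close> expand into such operators.\<close>

definition tridiff :: "real^'n^'n \<Rightarrow> (real^'n::finite \<Rightarrow> real) \<Rightarrow> (real^'n \<Rightarrow> real) \<Rightarrow> (real^'n \<Rightarrow> real) \<Rightarrow>
    nat \<Rightarrow> nat \<Rightarrow> nat \<Rightarrow> real^'n \<Rightarrow> real" where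
  "tridiff \<theta> f g h a b c x =
     (\<Sum>(xs, ys, us, ws, as, bs)\<in>len_lists b \<times> len_lists b \<times> len_lists c \<times> len_lists c \<times> len_lists a \<times> len_lists a.
        theta_prod \<theta> xs ys * theta_prod \<theta> us ws * theta_prod \<theta> as bs
          * (pds (xs @ as) f x * pds (us @ bs) g x * pds (ys @ ws) h x))"

lemma mstar_bidiff: "mstar \<theta> a b k x = (\<Sum>(p, q, N)\<in>triples k. 1 / fact N * bidiff \<theta> N (a p) (b q) x)"
proof -
  have inner: "(\<Sum>ks\<in>{ks. length ks = N}. \<Sum>js\<in>{js. length js = N}.
      (\<Prod>r<N. \<theta> $ (ks ! r) $ (js ! r)) * pds ks f x * pds js g x) = bidiff \<theta> N f g x" for N f g
    by (auto simp: bidiff_apply len_lists_def prod_theta_prod mult.assoc intro!: sum.cong)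
  show ?thesis
    unfolding mstar_def inner by (rule sum_triples)
qed

text \<open>The unit: only the term without contractions survives.\<close>

lemma bidiff_const_left: "bidiff \<theta> N (\<lambda>y. c) g x = (if N = 0 then c * g x else 0)"
  by (cases N) (auto simp: bidiff_apply len_lists_0 pds_const len_lists_def intro!: sum.neutral)

lemma bidiff_const_right: "bidiff \<theta> N g (\<lambda>y. c) x = (if N = 0 then g x * c else 0)"
  by (cases N) (auto simp: bidiff_apply len_lists_0 pds_const len_lists_def intro!: sum.neutral)

lemma mstar_one_left: "mstar \<theta> mone a k x = a k x"
proof -
  have "mstar \<theta> mone a k x = (\<Sum>t\<in>triples k. if t = (0, k, 0) then a k x else 0)"
    unfolding mstar_bidiff
    by (rule sum.cong) (auto simp: mone_def bidiff_const_left triples_def split: if_splits)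
  also have "\<dots> = a k x"
    by (subst sum.delta[OF finite_triples]) (simp add: triples_def)
  finally show ?thesis .
qed

lemma mstar_one_right: "mstar \<theta> a mone k x = a k x"
proof -
  have "mstar \<theta> a mone k x = (\<Sum>t\<in>triples k. if t = (k, 0, 0) then a k x else 0)"
    unfolding mstar_bidiff
    by (rule sum.cong) (auto simp: mone_def bidiff_const_right triples_def split: if_splits)
  also have "\<dots> = a k x"
    by (subst sum.delta[OF finite_triples]) (simp add: triples_def)
  finally show ?thesis .
qed

lemma dist_two_unit_steps:
  fixes a b :: "'a::real_normed_vector"
  assumes "norm a = 1" "norm b = 1" "0 \<le> s" "s \<le> h" "0 \<le> t" "t \<le> h"
  shows "dist (x + s *\<^sub>R a + t *\<^sub>R b) x \<le> 2 * h"
proof -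
  have "dist (x + s *\<^sub>R a + t *\<^sub>R b) x = norm (s *\<^sub>R a + t *\<^sub>R b)"
    by (simp add: dist_norm add.assoc)
  also have "\<dots> \<le> norm (s *\<^sub>R a) + norm (t *\<^sub>R b)"
    by (rule norm_triangle_ineq)
  also have "\<dots> \<le> 2 * h"
    using assms by simp
  finally show ?thesis .
qed

section \<open>Smooth functions on an open set\<close>

context
  fixes U :: "(real^'n::finite) set"
  assumes U: "open U"
begin

lemma eventually_line_in: "x \<in> U \<Longrightarrow> eventually (\<lambda>t. x + t *\<^sub>R axis i 1 \<in> U) (nhds (0::real))"
proof -
  assume x: "x \<in> U"
  then obtain e where e: "e > 0" "ball x e \<subseteq> U" using U open_contains_ball by blast
  show ?thesis unfolding eventually_nhds_metric
  proof (intro exI[of _ e] conjI allI impI)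
    fix t :: real assume "dist t 0 < e"
    then have "x + t *\<^sub>R axis i 1 \<in> ball x e" by (simp add: dist_norm)
    then show "x + t *\<^sub>R axis i 1 \<in> U" using e by blast
  qed (rule e)
qed

lemma pd_cong: "x \<in> U \<Longrightarrow> (\<And>y. y \<in> U \<Longrightarrow> f y = g y) \<Longrightarrow> pd i f x = pd i g x"
  unfolding pd_def
  by (rule deriv_cong_ev) (auto intro: eventually_mono[OF eventually_line_in[of x i]])

lemma pd_exists_cong: "x \<in> U \<Longrightarrow> (\<And>y. y \<in> U \<Longrightarrow> f y = g y) \<Longrightarrow> pd_exists f x i \<longleftrightarrow> pd_exists g x i"
proof -
  assume x: "x \<in> U" and fg: "\<And>y. y \<in> U \<Longrightarrow> f y = g y"
  have ev: "eventually (\<lambda>t. f (x + t *\<^sub>R axis i 1) = g (x + t *\<^sub>R axis i 1)) (nhds (0::real))"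
    by (rule eventually_mono[OF eventually_line_in[OF x, of i]]) (simp add: fg)
  show ?thesis unfolding pd_exists_def real_differentiable_def
    using DERIV_cong_ev[OF refl ev refl] by blast
qed

lemma pds_cong: "(\<And>y. y \<in> U \<Longrightarrow> f y = g y) \<Longrightarrow> x \<in> U \<Longrightarrow> pds ks f x = pds ks g x"
proof (induction ks arbitrary: x)
  case Nil then show ?case by simp
next
  case (Cons k ks) then show ?case by (auto intro: pd_cong)
qed

lemma smooth_pd_exists: "smooth_on U f \<Longrightarrow> x \<in> U \<Longrightarrow> pd_exists (pds ks f) x i"
  unfolding smooth_on_def pd_exists_def by blast

lemma smooth_continuous: "smooth_on U f \<Longrightarrow> continuous_on U (pds ks f)"
  unfolding smooth_on_def by blast

lemma smooth_pd_exists0: "smooth_on U f \<Longrightarrow> x \<in> U \<Longrightarrow> pd_exists f x i"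
  using smooth_pd_exists[of f x "[]"] by simp

lemma smooth_onI:
  assumes "\<And>ks y. y \<in> U \<Longrightarrow> pds ks f y = h ks y" and "\<And>ks. continuous_on U (h ks)"
    and "\<And>ks i x. x \<in> U \<Longrightarrow> pd_exists (h ks) x i"
  shows "smooth_on U f"
  unfolding smooth_on_def
proof (intro allI conjI ballI)
  fix ks i x
  show "continuous_on U (pds ks f)"
    using assms(1,2) continuous_on_cong by fastforce
  assume "x \<in> U"
  then show "(\<lambda>t. pds ks f (x + t *\<^sub>R axis i 1)) differentiable at 0"
    using pd_exists_cong[of x "pds ks f" "h ks" i] assms(1,3) by (simp add: pd_exists_def)
qed

lemma smooth_cong: "(\<And>y. y \<in> U \<Longrightarrow> f y = g y) \<Longrightarrow> smooth_on U f \<Longrightarrow> smooth_on U g"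
  by (rule smooth_onI[where h = "\<lambda>ks. pds ks f"]) (auto intro: pds_cong smooth_continuous smooth_pd_exists)

lemma smooth_pds: "smooth_on U f \<Longrightarrow> smooth_on U (pds js f)"
  unfolding smooth_on_def by (simp add: pds_append[symmetric])

lemma smooth_pd: "smooth_on U f \<Longrightarrow> smooth_on U (pd i f)"
  using smooth_pds[of f "[i]"] by simp

lemma smooth_const: "smooth_on U (\<lambda>y. c)"
  unfolding smooth_on_def
proof (intro allI conjI ballI)
  fix ks i x
  show "continuous_on U (pds ks (\<lambda>y. c))" by (simp add: pds_const)
  show "(\<lambda>t. pds ks (\<lambda>y. c) (x + t *\<^sub>R axis i 1)) differentiable at 0"
    by (simp add: pds_const)
qed

lemma pds_add: "smooth_on U f \<Longrightarrow> smooth_on U g \<Longrightarrow> x \<in> U \<Longrightarrow>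
   pds ks (\<lambda>y. f y + g y) x = pds ks f x + pds ks g x"
proof (induction ks arbitrary: x)
  case Nil then show ?case by simp
next
  case (Cons k ks)
  have "pds (k # ks) (\<lambda>y. f y + g y) x = pd k (\<lambda>y. pds ks f y + pds ks g y) x"
    unfolding pds.simps by (rule pd_cong) (use Cons in auto)
  also have "\<dots> = pd k (pds ks f) x + pd k (pds ks g) x"
    using pd_exists_add[OF smooth_pd_exists smooth_pd_exists] Cons by blast
  finally show ?case by simp
qed

lemma smooth_add: "smooth_on U f \<Longrightarrow> smooth_on U g \<Longrightarrow> smooth_on U (\<lambda>y. f y + g y)"
  by (rule smooth_onI[where h = "\<lambda>ks y. pds ks f y + pds ks g y"])
    (auto simp: pds_add intro: continuous_on_add smooth_continuous pd_exists_add[THEN conjunct1]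
      smooth_pd_exists)

lemma pds_cmult: "smooth_on U f \<Longrightarrow> x \<in> U \<Longrightarrow> pds ks (\<lambda>y. c * f y) x = c * pds ks f x"
proof (induction ks arbitrary: x)
  case Nil then show ?case by simp
next
  case (Cons k ks)
  have "pds (k # ks) (\<lambda>y. c * f y) x = pd k (\<lambda>y. c * pds ks f y) x"
    unfolding pds.simps by (rule pd_cong) (use Cons in auto)
  also have "\<dots> = c * pd k (pds ks f) x"
    using pd_exists_cmult[OF smooth_pd_exists] Cons by blast
  finally show ?case by simp
qed

lemma smooth_cmult: "smooth_on U f \<Longrightarrow> smooth_on U (\<lambda>y. c * f y)"
  by (rule smooth_onI[where h = "\<lambda>ks y. c * pds ks f y"])
    (auto simp: pds_cmult intro: continuous_on_mult continuous_on_const smooth_continuous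
      pd_exists_cmult[THEN conjunct1] smooth_pd_exists)

lemma smooth_sum: "finite S \<Longrightarrow> (\<And>j. j \<in> S \<Longrightarrow> smooth_on U (u j)) \<Longrightarrow> smooth_on U (\<lambda>y. \<Sum>j\<in>S. u j y)"
  by (induction S rule: finite_induct) (auto intro: smooth_add smooth_const)

lemma pds_sum: "finite S \<Longrightarrow> (\<And>j. j \<in> S \<Longrightarrow> smooth_on U (u j)) \<Longrightarrow> x \<in> U \<Longrightarrow>
   pds ks (\<lambda>y. \<Sum>j\<in>S. u j y) x = (\<Sum>j\<in>S. pds ks (u j) x)"
proof (induction S rule: finite_induct)
  case empty then show ?case by (simp add: pds_const)
next
  case (insert a S)
  have "pds ks (\<lambda>y. \<Sum>j\<in>insert a S. u j y) x = pds ks (\<lambda>y. u a y + (\<Sum>j\<in>S. u j y)) x"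
    using insert by simp
  also have "\<dots> = pds ks (u a) x + pds ks (\<lambda>y. \<Sum>j\<in>S. u j y) x"
    using insert by (intro pds_add smooth_sum) auto
  finally show ?case using insert by simp
qed

lemma pds_mult:
  "smooth_on U f \<Longrightarrow> smooth_on U g \<Longrightarrow> x \<in> U \<Longrightarrow> pds ks (\<lambda>y. f y * g y) x
     = (\<Sum>cs\<in>len_lists (length ks). pds (sel cs ks) f x * pds (sel (map Not cs) ks) g x)"
proof (induction ks arbitrary: x)
  case Nil then show ?case by (simp add: len_lists_0)
next
  case (Cons k ks)
  let ?A = "\<lambda>cs. pds (sel cs ks) f" and ?B = "\<lambda>cs. pds (sel (map Not cs) ks) g"
  have "pds (k # ks) (\<lambda>y. f y * g y) x = pd k (\<lambda>y. \<Sum>cs\<in>len_lists (length ks). ?A cs y * ?B cs y) x"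
    unfolding pds.simps by (rule pd_cong) (use Cons in auto)
  also have "\<dots> = (\<Sum>cs\<in>len_lists (length ks). pd k (\<lambda>y. ?A cs y * ?B cs y) x)"
    using pd_exists_sum[OF finite_len_lists, where u = "\<lambda>cs y. ?A cs y * ?B cs y" and x = x and i = k]
      pd_exists_mult smooth_pd_exists Cons.prems by blast
  also have "\<dots> = (\<Sum>cs\<in>len_lists (length ks). pd k (?A cs) x * ?B cs x + ?A cs x * pd k (?B cs) x)"
  proof (rule sum.cong[OF refl])
    fix cs
    show "pd k (\<lambda>y. ?A cs y * ?B cs y) x = pd k (?A cs) x * ?B cs x + ?A cs x * pd k (?B cs) x"
      by (rule pd_exists_mult[THEN conjunct2]) (use smooth_pd_exists Cons.prems in blast)+
  qed
  also have "\<dots> = (\<Sum>cs\<in>len_lists (length (k # ks)).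
      pds (sel cs (k # ks)) f x * pds (sel (map Not cs) (k # ks)) g x)"
    by (simp add: sum_len_lists_Suc sum.distrib)
  finally show ?case .
qed

lemma smooth_mult: "smooth_on U f \<Longrightarrow> smooth_on U g \<Longrightarrow> smooth_on U (\<lambda>y. f y * g y)"
  by (rule smooth_onI[where
        h = "\<lambda>ks y. \<Sum>cs\<in>len_lists (length ks). pds (sel cs ks) f y * pds (sel (map Not cs) ks) g y"])
    (auto simp: pds_mult intro!: continuous_on_sum continuous_on_mult smooth_continuous
      pd_exists_sum[THEN conjunct1] pd_exists_mult[THEN conjunct1] smooth_pd_exists)

subsection \<open>Commuting partial derivatives\<close>

lemma DERIV_along_line: "smooth_on U f \<Longrightarrow> y + s *\<^sub>R axis i 1 \<in> U \<Longrightarrow>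
  ((\<lambda>t. f (y + t *\<^sub>R axis i 1)) has_real_derivative pd i f (y + s *\<^sub>R axis i 1)) (at s)"
proof -
  assume f: "smooth_on U f" and z: "y + s *\<^sub>R axis i 1 \<in> U"
  have "((\<lambda>u. f ((y + s *\<^sub>R axis i 1) + u *\<^sub>R axis i 1))
      has_real_derivative pd i f (y + s *\<^sub>R axis i 1)) (at 0)"
    by (rule pd_exists_DERIV) (rule smooth_pd_exists0[OF f z])
  moreover have "(\<lambda>u. f ((y + s *\<^sub>R axis i 1) + u *\<^sub>R axis i 1)) = (\<lambda>u. f (y + (u + s) *\<^sub>R axis i 1))"
    by (simp add: algebra_simps)
  ultimately have "((\<lambda>u. f (y + (u + s) *\<^sub>R axis i 1))
      has_real_derivative pd i f (y + s *\<^sub>R axis i 1)) (at 0)"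
    by simp
  then show ?thesis using DERIV_shift[of "\<lambda>t. f (y + t *\<^sub>R axis i 1)" _ 0 s] by simp
qed

lemma second_difference_mvt:
  assumes f: "smooth_on U f" and h: "h > 0" and cb: "cball x (2 * h) \<subseteq> U"
  shows "\<exists>p. dist p x \<le> 2 * h \<and>
    f (x + h *\<^sub>R axis i 1 + h *\<^sub>R axis j 1) - f (x + h *\<^sub>R axis i 1) - f (x + h *\<^sub>R axis j 1) + f x
      = h * h * pd j (pd i f) p"
proof -
  define a where "a = (axis i 1 :: real^'n)"
  define b where "b = (axis j 1 :: real^'n)"
  have na: "norm a = 1" and nb: "norm b = 1" by (simp_all add: a_def b_def)
  have inU: "x + s *\<^sub>R a + t *\<^sub>R b \<in> U" if "0 \<le> s" "s \<le> h" "0 \<le> t" "t \<le> h" for s t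
    using dist_two_unit_steps[OF na nb that, of x] cb by (auto simp: dist_commute)
  define \<phi> where "\<phi> s = f ((x + h *\<^sub>R b) + s *\<^sub>R a) - f (x + s *\<^sub>R a)" for s
  have d\<phi>: "(\<phi> has_real_derivative (pd i f ((x + h *\<^sub>R b) + s *\<^sub>R a) - pd i f (x + s *\<^sub>R a))) (at s)"
    if "0 \<le> s" "s \<le> h" for s
    unfolding \<phi>_def a_def
  proof (intro DERIV_diff DERIV_along_line[OF f])
    show "x + h *\<^sub>R b + s *\<^sub>R axis i 1 \<in> U" using inU[of s h] that h by (simp add: a_def algebra_simps)
    show "x + s *\<^sub>R axis i 1 \<in> U" using inU[of s 0] that h by (simp add: a_def)
  qed
  obtain s1 where s1: "0 < s1" "s1 < h"
    "\<phi> h - \<phi> 0 = (h - 0) * (pd i f ((x + h *\<^sub>R b) + s1 *\<^sub>R a) - pd i f (x + s1 *\<^sub>R a))"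
    using MVT2[OF h d\<phi>] by blast
  define \<psi> where "\<psi> t = pd i f ((x + s1 *\<^sub>R a) + t *\<^sub>R b)" for t
  have d\<psi>: "(\<psi> has_real_derivative pd j (pd i f) ((x + s1 *\<^sub>R a) + t *\<^sub>R b)) (at t)"
    if "0 \<le> t" "t \<le> h" for t
    unfolding \<psi>_def b_def
    by (rule DERIV_along_line[OF smooth_pd[OF f]]) (use inU[of s1 t] that s1 in \<open>simp add: b_def\<close>)
  obtain t1 where t1: "0 < t1" "t1 < h"
    "\<psi> h - \<psi> 0 = (h - 0) * pd j (pd i f) ((x + s1 *\<^sub>R a) + t1 *\<^sub>R b)"
    using MVT2[OF h d\<psi>] by blast
  define p where "p = (x + s1 *\<^sub>R a) + t1 *\<^sub>R b"
  have dp: "dist p x \<le> 2 * h"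
    unfolding p_def using dist_two_unit_steps[OF na nb, of s1 h t1 x] s1 t1 by simp
  have "f (x + h *\<^sub>R a + h *\<^sub>R b) - f (x + h *\<^sub>R a) - f (x + h *\<^sub>R b) + f x = \<phi> h - \<phi> 0"
    by (simp add: \<phi>_def algebra_simps)
  also have "\<dots> = h * (\<psi> h - \<psi> 0)"
    using s1(3) by (simp add: \<psi>_def algebra_simps)
  also have "\<dots> = h * h * pd j (pd i f) p" using t1(3) by (simp add: p_def)
  finally show ?thesis using dp unfolding a_def b_def by blast
qed

text \<open>Schwarz's theorem: both second difference quotients coincide, so the two continuous
  mixed partials agree in the limit.\<close>

lemma pd_commute:
  assumes f: "smooth_on U f" and x: "x \<in> U"
  shows "pd i (pd j f) x = pd j (pd i f) x"
proof (rule ccontr)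
  assume ne: "pd i (pd j f) x \<noteq> pd j (pd i f) x"
  define \<epsilon> where "\<epsilon> = \<bar>pd i (pd j f) x - pd j (pd i f) x\<bar> / 2"
  have e: "\<epsilon> > 0" using ne by (simp add: \<epsilon>_def)
  have c1: "isCont (pd j (pd i f)) x"
    using smooth_continuous[OF f, of "[j, i]"] continuous_on_eq_continuous_at[OF U] x by auto
  have c2: "isCont (pd i (pd j f)) x"
    using smooth_continuous[OF f, of "[i, j]"] continuous_on_eq_continuous_at[OF U] x by auto
  obtain d1 where d1: "d1 > 0" "\<And>y. dist y x < d1 \<Longrightarrow> dist (pd j (pd i f) y) (pd j (pd i f) x) < \<epsilon>"
    using c1 e unfolding continuous_at_eps_delta by blast
  obtain d2 where d2: "d2 > 0" "\<And>y. dist y x < d2 \<Longrightarrow> dist (pd i (pd j f) y) (pd i (pd j f) x) < \<epsilon>"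
    using c2 e unfolding continuous_at_eps_delta by blast
  obtain r where r: "r > 0" "cball x r \<subseteq> U" using U x open_contains_cball by blast
  define h where "h = min (min d1 d2) r / 4"
  have h: "h > 0" using d1 d2 r by (simp add: h_def)
  have "2 * h \<le> r" using d1 d2 r by (simp add: h_def)
  then have cb: "cball x (2 * h) \<subseteq> U" using r(2) by (meson order.trans subset_cball)
  obtain p where p: "dist p x \<le> 2 * h"
    "f (x + h *\<^sub>R axis i 1 + h *\<^sub>R axis j 1) - f (x + h *\<^sub>R axis i 1) - f (x + h *\<^sub>R axis j 1) + f x
      = h * h * pd j (pd i f) p"
    using second_difference_mvt[OF f h cb, of i j] by blast
  obtain q where q: "dist q x \<le> 2 * h"
    "f (x + h *\<^sub>R axis j 1 + h *\<^sub>R axis i 1) - f (x + h *\<^sub>R axis j 1) - f (x + h *\<^sub>R axis i 1) + f x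
      = h * h * pd i (pd j f) q"
    using second_difference_mvt[OF f h cb, of j i] by blast
  have "h * h * pd j (pd i f) p = h * h * pd i (pd j f) q"
    using p(2) q(2) by (simp add: algebra_simps)
  then have pq: "pd j (pd i f) p = pd i (pd j f) q" using h by simp
  have "dist p x < d1" using p(1) h by (simp add: h_def)
  then have "dist (pd j (pd i f) p) (pd j (pd i f) x) < \<epsilon>" by (rule d1(2))
  moreover have "dist q x < d2" using q(1) h by (simp add: h_def)
  then have "dist (pd i (pd j f) q) (pd i (pd j f) x) < \<epsilon>" by (rule d2(2))
  ultimately show False using pq unfolding dist_real_def \<epsilon>_def by (simp add: abs_if split: if_split_asm)
qed

lemma pds_swap: "smooth_on U f \<Longrightarrow> x \<in> U \<Longrightarrow> pds (xs @ i # j # ys) f x = pds (xs @ j # i # ys) f x"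
proof -
  assume f: "smooth_on U f" and x: "x \<in> U"
  have "\<And>y. y \<in> U \<Longrightarrow> pds (i # j # ys) f y = pds (j # i # ys) f y"
    using pd_commute[OF smooth_pds[OF f]] by simp
  then have "pds xs (pds (i # j # ys) f) x = pds xs (pds (j # i # ys) f) x"
    by (intro pds_cong x) blast
  then show ?thesis by (simp add: pds_append)
qed

lemma pds_tofront: "smooth_on U f \<Longrightarrow> x \<in> U \<Longrightarrow> pds (xs @ k # ys) f x = pds (k # xs @ ys) f x"
proof (induction xs arbitrary: x)
  case Nil then show ?case by simp
next
  case (Cons a xs)
  have "pds ((a # xs) @ k # ys) f x = pd a (pds (k # xs @ ys) f) x"
    unfolding append_Cons pds.simps by (rule pd_cong) (use Cons in auto)
  also have "\<dots> = pds ([] @ a # k # xs @ ys) f x" by simp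
  also have "\<dots> = pds ([] @ k # a # xs @ ys) f x" by (rule pds_swap) (use Cons in auto)
  finally show ?case by simp
qed

lemma pds_perm: "smooth_on U f \<Longrightarrow> mset ks = mset ks' \<Longrightarrow> x \<in> U \<Longrightarrow> pds ks f x = pds ks' f x"
proof (induction ks arbitrary: ks' x)
  case Nil then show ?case by simp
next
  case (Cons k ks)
  have "k \<in> set ks'" using Cons.prems(2) by (metis list.set_intros(1) set_mset_mset)
  then obtain xs ys where ks': "ks' = xs @ k # ys" by (meson split_list)
  have m: "mset ks = mset (xs @ ys)" using Cons.prems(2) ks' by simp
  have "pds (k # ks) f x = pd k (pds (xs @ ys) f) x"
    unfolding pds.simps by (rule pd_cong) (use Cons.IH[OF Cons.prems(1) m] Cons.prems in auto)
  also have "\<dots> = pds ks' f x" using pds_tofront[OF Cons.prems(1,3), of xs k ys] ks' by simp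
  finally show ?case .
qed

lemma pds_append_commute: "smooth_on U f \<Longrightarrow> x \<in> U \<Longrightarrow> pds (xs @ ys) f x = pds (ys @ xs) f x"
  by (rule pds_perm) (simp_all add: add.commute)

lemma pds_merge:
  "smooth_on U f \<Longrightarrow> x \<in> U \<Longrightarrow> length us = ntrue cs \<Longrightarrow> length vs = length cs - ntrue cs \<Longrightarrow>
    pds (merge cs us vs) f x = pds (us @ vs) f x"
  by (rule pds_perm) (simp_all add: mset_merge)

section \<open>The Moyal product is an associative product with a Leibniz rule\<close>

lemma smooth_bidiff: "smooth_on U f \<Longrightarrow> smooth_on U g \<Longrightarrow> smooth_on U (bidiff \<theta> N f g)"
  unfolding bidiff_def by (intro smooth_sum finite_len_lists smooth_cmult smooth_mult smooth_pds)

lemma pds_bidiff: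
  assumes f: "smooth_on U f" and g: "smooth_on U g" and x: "x \<in> U"
  shows "pds ks (bidiff \<theta> N f g) x = (\<Sum>as\<in>len_lists N. \<Sum>bs\<in>len_lists N. theta_prod \<theta> as bs *
     (\<Sum>cs\<in>len_lists (length ks). pds (sel cs ks @ as) f x * pds (sel (map Not cs) ks @ bs) g x))"
proof -
  have sm: "smooth_on U (\<lambda>y. pds as f y * pds bs g y)" for as bs
    using smooth_mult[OF smooth_pds[OF f] smooth_pds[OF g]] .
  have "pds ks (bidiff \<theta> N f g) x
      = (\<Sum>as\<in>len_lists N. \<Sum>bs\<in>len_lists N. theta_prod \<theta> as bs * pds ks (\<lambda>y. pds as f y * pds bs g y) x)"
    unfolding bidiff_def
    by (simp add: pds_sum[OF finite_len_lists _ x] smooth_sum smooth_cmult sm pds_cmult[OF sm x])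
  then show ?thesis
    by (simp add: pds_mult[OF smooth_pds[OF f] smooth_pds[OF g] x] pds_append)
qed

lemma pd_bidiff:
  assumes f: "smooth_on U f" and g: "smooth_on U g" and x: "x \<in> U"
  shows "pd i (bidiff \<theta> N f g) x = bidiff \<theta> N (pd i f) g x + bidiff \<theta> N f (pd i g) x"
proof -
  have pd_last: "pd i (pds as u) x = pds as (pd i u) x" if "smooth_on U u" for u as
    using pds_append_commute[OF that x, of "[i]" as] by (simp add: pds_append)
  have "len_lists (Suc 0) = {[True], [False]}"
    by (auto simp: len_lists_def length_Suc_conv)
  then show ?thesis
    using pds_bidiff[OF f g x, of "[i]"]
    by (simp add: bidiff_apply pd_last f g distrib_left sum.distrib algebra_simps)
qed

lemma bidiff_add_left:
  "smooth_on U f \<Longrightarrow> smooth_on U g \<Longrightarrow> x \<in> U \<Longrightarrow>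
    bidiff \<theta> N (\<lambda>y. f y + g y) h x = bidiff \<theta> N f h x + bidiff \<theta> N g h x"
  by (simp add: bidiff_apply pds_add distrib_left distrib_right sum.distrib)

lemma bidiff_add_right:
  "smooth_on U f \<Longrightarrow> smooth_on U g \<Longrightarrow> x \<in> U \<Longrightarrow>
    bidiff \<theta> N h (\<lambda>y. f y + g y) x = bidiff \<theta> N h f x + bidiff \<theta> N h g x"
  by (simp add: bidiff_apply pds_add distrib_left distrib_right sum.distrib)

lemma bidiff_sum_left:
  "finite S \<Longrightarrow> (\<And>t. t \<in> S \<Longrightarrow> smooth_on U (u t)) \<Longrightarrow> x \<in> U \<Longrightarrow>
    bidiff \<theta> M (\<lambda>y. \<Sum>t\<in>S. u t y) h x = (\<Sum>t\<in>S. bidiff \<theta> M (u t) h x)"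
  by (simp add: bidiff_apply pds_sum sum_distrib_left sum_distrib_right mult_ac)
    (subst sum.swap, rule sum.cong, simp, subst sum.swap, simp)

lemma bidiff_sum_right:
  "finite S \<Longrightarrow> (\<And>t. t \<in> S \<Longrightarrow> smooth_on U (u t)) \<Longrightarrow> x \<in> U \<Longrightarrow>
    bidiff \<theta> M h (\<lambda>y. \<Sum>t\<in>S. u t y) x = (\<Sum>t\<in>S. bidiff \<theta> M h (u t) x)"
  by (simp add: bidiff_apply pds_sum sum_distrib_left sum_distrib_right mult_ac)
    (subst sum.swap, rule sum.cong, simp, subst sum.swap, simp)

lemma pds_divide: "smooth_on U f \<Longrightarrow> x \<in> U \<Longrightarrow> pds ks (\<lambda>y. f y / c) x = pds ks f x / c"
  using pds_cmult[of f x ks "1 / c"] by simp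

lemma pd_divide: "smooth_on U f \<Longrightarrow> x \<in> U \<Longrightarrow> pd i (\<lambda>y. f y / c) x = pd i f x / c"
  using pds_divide[of f x "[i]" c] by simp

lemma smooth_divide: "smooth_on U f \<Longrightarrow> smooth_on U (\<lambda>y. f y / c)"
  using smooth_cmult[of f "1 / c"] by simp

lemma bidiff_divide_left:
  "smooth_on U f \<Longrightarrow> x \<in> U \<Longrightarrow> bidiff \<theta> M (\<lambda>y. f y / c) h x = bidiff \<theta> M f h x / c"
  by (simp add: bidiff_apply pds_divide sum_divide_distrib)

lemma bidiff_divide_right:
  "smooth_on U f \<Longrightarrow> x \<in> U \<Longrightarrow> bidiff \<theta> M h (\<lambda>y. f y / c) x = bidiff \<theta> M h f x / c"
  by (simp add: bidiff_apply pds_divide sum_divide_distrib)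

subsection \<open>Associativity of the bidifferential operators\<close>

text \<open>Expanding the derivatives of the inner operator by the Leibniz rule, a nested \<open>bidiff\<close>
  becomes a sum of \<open>tridiff\<close> operators, one for each way of distributing the outer contractions
  over the two inner factors.\<close>

lemma bidiff_nested_left:
  assumes f: "smooth_on U f" and g: "smooth_on U g" and h: "smooth_on U h" and x: "x \<in> U"
  shows "bidiff \<theta> M (bidiff \<theta> N f g) h x = (\<Sum>cs\<in>len_lists M. tridiff \<theta> f g h N (ntrue cs) (M - ntrue cs) x)"
proof -
  define P where "P ks js as bs cs = theta_prod \<theta> ks js * theta_prod \<theta> as bs
      * (pds (sel cs ks @ as) f x * pds (sel (map Not cs) ks @ bs) g x * pds js h x)" for ks js as bs cs
  have "bidiff \<theta> M (bidiff \<theta> N f g) h x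
      = (\<Sum>ks\<in>len_lists M. \<Sum>js\<in>len_lists M. \<Sum>as\<in>len_lists N. \<Sum>bs\<in>len_lists N. \<Sum>cs\<in>len_lists M. P ks js as bs cs)"
    unfolding bidiff_apply[of \<theta> M] P_def
    by (intro sum.cong refl)
      (simp add: pds_bidiff[OF f g x] len_lists_def sum_distrib_left sum_distrib_right mult_ac)
  also have "\<dots> = (\<Sum>(cs, xs, ys, us, ws, as, bs)\<in>(SIGMA cs:len_lists M. len_lists (ntrue cs)
        \<times> len_lists (ntrue cs) \<times> len_lists (M - ntrue cs) \<times> len_lists (M - ntrue cs) \<times> len_lists N \<times> len_lists N).
       P (merge cs xs us) (merge cs ys ws) as bs cs)"
    by (simp add: sum.cartesian_product sum_split_by_choice)
  also have "\<dots> = (\<Sum>cs\<in>len_lists M. tridiff \<theta> f g h N (ntrue cs) (M - ntrue cs) x)"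
    unfolding tridiff_def
    by (simp add: sum.Sigma split_def, intro sum.cong refl)
      (auto simp: P_def len_lists_def sel_merge nsel_merge theta_prod_merge pds_merge[OF h x])
  finally show ?thesis .
qed

lemma bidiff_nested_right:
  assumes f: "smooth_on U f" and g: "smooth_on U g" and h: "smooth_on U h" and x: "x \<in> U"
  shows "bidiff \<theta> M f (bidiff \<theta> N g h) x = (\<Sum>cs\<in>len_lists M. tridiff \<theta> f g h (ntrue cs) (M - ntrue cs) N x)"
proof -
  define P where "P ks js as bs cs = theta_prod \<theta> ks js * theta_prod \<theta> as bs
      * (pds ks f x * pds (sel cs js @ as) g x * pds (sel (map Not cs) js @ bs) h x)" for ks js as bs cs
  have "bidiff \<theta> M f (bidiff \<theta> N g h) x
      = (\<Sum>ks\<in>len_lists M. \<Sum>js\<in>len_lists M. \<Sum>as\<in>len_lists N. \<Sum>bs\<in>len_lists N. \<Sum>cs\<in>len_lists M. P ks js as bs cs)"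
    unfolding bidiff_apply[of \<theta> M] P_def
    by (intro sum.cong refl)
      (simp add: pds_bidiff[OF g h x] len_lists_def sum_distrib_left sum_distrib_right mult_ac)
  also have "\<dots> = (\<Sum>(cs, xs, ys, us, ws, as, bs)\<in>(SIGMA cs:len_lists M. len_lists (ntrue cs)
        \<times> len_lists (ntrue cs) \<times> len_lists (M - ntrue cs) \<times> len_lists (M - ntrue cs) \<times> len_lists N \<times> len_lists N).
       P (merge cs xs us) (merge cs ys ws) as bs cs)"
    by (simp add: sum.cartesian_product sum_split_by_choice)
  also have "\<dots> = (\<Sum>cs\<in>len_lists M. \<Sum>(xs, ys, us, ws, as, bs)\<in>len_lists (ntrue cs)
        \<times> len_lists (ntrue cs) \<times> len_lists (M - ntrue cs) \<times> len_lists (M - ntrue cs) \<times> len_lists N \<times> len_lists N.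
       P (merge cs xs us) (merge cs ys ws) as bs cs)"
    by (simp add: sum.Sigma split_def)
  also have "\<dots> = (\<Sum>cs\<in>len_lists M. tridiff \<theta> f g h (ntrue cs) (M - ntrue cs) N x)"
    unfolding tridiff_def
    by (rule sum.cong[OF refl], rule sum.reindex_bij_witness[where
          i = "\<lambda>(us, ws, as, bs, xs, ys). (xs, ys, us, ws, as, bs)"
          and j = "\<lambda>(xs, ys, us, ws, as, bs). (us, ws, as, bs, xs, ys)"])
      (auto simp: P_def len_lists_def sel_merge nsel_merge theta_prod_merge pds_merge[OF f x]
         pds_append_commute[OF f x] pds_append_commute[OF g x] mult_ac)
  finally show ?thesis .
qed

text \<open>Collecting choice vectors by their number of true entries produces binomial
  coefficients, which combine with the factorials into multinomial weights.\<close>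

lemma sum_len_lists_binomial:
  fixes \<phi> :: "nat \<Rightarrow> real"
  shows "(\<Sum>cs\<in>len_lists M. \<phi> (ntrue cs)) / (fact N * fact M)
    = (\<Sum>s\<le>M. \<phi> s / (fact N * fact s * fact (M - s)))"
proof -
  have weight: "of_nat (M choose s) * \<phi> s / (fact N * fact M) = \<phi> s / (fact N * fact s * fact (M - s))"
    if "s \<le> M" for s
    using that by (simp add: binomial_fact field_simps)
  have "(\<Sum>cs\<in>len_lists M. \<phi> (ntrue cs)) / (fact N * fact M)
      = (\<Sum>s\<le>M. of_nat (M choose s) * \<phi> s / (fact N * fact M))"
    by (simp add: sum_len_lists_ntrue sum_divide_distrib)
  also have "\<dots> = (\<Sum>s\<le>M. \<phi> s / (fact N * fact s * fact (M - s)))"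
    by (rule sum.cong) (simp_all add: weight)
  finally show ?thesis .
qed

text \<open>The order-\<open>K\<close> parts of both bracketings agree: both equal the sum of \<open>tridiff\<close> over
  all \<open>a + b + c = K\<close> with weight \<open>1/(a! b! c!)\<close>.\<close>

lemma bidiff_assoc_graded:
  assumes f: "smooth_on U f" and g: "smooth_on U g" and h: "smooth_on U h" and x: "x \<in> U"
  shows "(\<Sum>N\<le>K. bidiff \<theta> (K - N) (bidiff \<theta> N f g) h x / (fact N * fact (K - N))) =
         (\<Sum>N\<le>K. bidiff \<theta> (K - N) f (bidiff \<theta> N g h) x / (fact N * fact (K - N)))"
proof -
  define W where "W a b c = tridiff \<theta> f g h a b c x / (fact a * fact b * fact c)" for a b c
  have "(\<Sum>N\<le>K. bidiff \<theta> (K - N) (bidiff \<theta> N f g) h x / (fact N * fact (K - N)))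
      = (\<Sum>N\<le>K. \<Sum>s\<le>K - N. W N s (K - N - s))"
    unfolding bidiff_nested_left[OF f g h x] W_def
    by (intro sum.cong refl sum_len_lists_binomial[where \<phi> = "\<lambda>s. tridiff \<theta> f g h N s (K - N - s) x" for N])
  also have "\<dots> = (\<Sum>(a, b, c)\<in>triples K. W a b c)"
    by (rule sum_triples)
  also have "\<dots> = (\<Sum>(a, b, c)\<in>triples K. W b c a)"
    by (rule sum.reindex_bij_witness[where i = "\<lambda>(a, b, c). (b, c, a)" and j = "\<lambda>(a, b, c). (c, a, b)"])
      (auto simp: triples_def)
  also have "\<dots> = (\<Sum>N\<le>K. \<Sum>s\<le>K - N. W s (K - N - s) N)"
    by (rule sum_triples[symmetric])
  also have "\<dots> = (\<Sum>N\<le>K. \<Sum>s\<le>K - N. tridiff \<theta> f g h s (K - N - s) N x / (fact N * fact s * fact (K - N - s)))"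
    by (simp add: W_def mult_ac)
  also have "\<dots> = (\<Sum>N\<le>K. bidiff \<theta> (K - N) f (bidiff \<theta> N g h) x / (fact N * fact (K - N)))"
    unfolding bidiff_nested_right[OF f g h x]
    by (intro sum.cong refl sum_len_lists_binomial[where \<phi> = "\<lambda>s. tridiff \<theta> f g h s (K - N - s) N x" for N,
          symmetric])
  finally show ?thesis .
qed

definition mterm :: "real^'n^'n \<Rightarrow> 'n moyal \<Rightarrow> 'n moyal \<Rightarrow> nat \<times> nat \<times> nat \<Rightarrow> real^'n \<Rightarrow> real" where
  "mterm \<theta> a b t = (case t of (p, q, N) \<Rightarrow> (\<lambda>y. bidiff \<theta> N (a p) (b q) y / fact N))"

lemma mstar_mterm: "mstar \<theta> a b k = (\<lambda>y. \<Sum>t\<in>triples k. mterm \<theta> a b t y)"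
  by (simp add: fun_eq_iff mstar_bidiff mterm_def split_def)

lemma smooth_mterm: "moyal_elem U a \<Longrightarrow> moyal_elem U b \<Longrightarrow> smooth_on U (mterm \<theta> a b t)"
  by (cases t) (simp add: mterm_def moyal_elem_def smooth_divide smooth_bidiff)

lemma smooth_mstar: "moyal_elem U a \<Longrightarrow> moyal_elem U b \<Longrightarrow> moyal_elem U (mstar \<theta> a b)"
  by (simp add: moyal_elem_def mstar_mterm smooth_sum smooth_mterm[unfolded moyal_elem_def])

lemma mstar_mstar_left:
  assumes a: "moyal_elem U a" and b: "moyal_elem U b" and c: "moyal_elem U c" and x: "x \<in> U"
  shows "mstar \<theta> (mstar \<theta> a b) c k x = (\<Sum>(p, q, r, K)\<in>quadruples k. \<Sum>N\<le>K.
           bidiff \<theta> (K - N) (bidiff \<theta> N (a p) (b q)) (c r) x / (fact N * fact (K - N)))"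
proof -
  have "1 / fact M * bidiff \<theta> M (mstar \<theta> a b p') (c r) x
      = (\<Sum>(p, q, N)\<in>triples p'. bidiff \<theta> M (bidiff \<theta> N (a p) (b q)) (c r) x / (fact N * fact M))"
    for p' r M
    using a b c
    by (simp add: mstar_mterm bidiff_sum_left[OF finite_triples smooth_mterm x] sum_distrib_left,
        intro sum.cong refl)
      (auto simp: mterm_def moyal_elem_def bidiff_divide_left smooth_bidiff x)
  then show ?thesis
    by (simp add: mstar_bidiff[of \<theta> "mstar \<theta> a b"] sum_triples_regroup_left)
qed

lemma mstar_mstar_right:
  assumes a: "moyal_elem U a" and b: "moyal_elem U b" and c: "moyal_elem U c" and x: "x \<in> U"
  shows "mstar \<theta> a (mstar \<theta> b c) k x = (\<Sum>(p, q, r, K)\<in>quadruples k. \<Sum>N\<le>K.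
           bidiff \<theta> (K - N) (a p) (bidiff \<theta> N (b q) (c r)) x / (fact N * fact (K - N)))"
proof -
  have "1 / fact M * bidiff \<theta> M (a p) (mstar \<theta> b c q') x
      = (\<Sum>(q, r, N)\<in>triples q'. bidiff \<theta> M (a p) (bidiff \<theta> N (b q) (c r)) x / (fact N * fact M))"
    for p q' M
    using a b c
    by (simp add: mstar_mterm bidiff_sum_right[OF finite_triples smooth_mterm x] sum_distrib_left,
        intro sum.cong refl)
      (auto simp: mterm_def moyal_elem_def bidiff_divide_right smooth_bidiff x)
  then show ?thesis
    by (simp add: mstar_bidiff[of \<theta> a "mstar \<theta> b c"] sum_triples_regroup_right)
qed

lemma mstar_assoc:
  assumes "moyal_elem U a" "moyal_elem U b" "moyal_elem U c" "x \<in> U"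
  shows "mstar \<theta> (mstar \<theta> a b) c k x = mstar \<theta> a (mstar \<theta> b c) k x"
  using assms
  by (simp add: mstar_mstar_left mstar_mstar_right moyal_elem_def bidiff_assoc_graded)

lemma mstar_add_left:
  "moyal_elem U a \<Longrightarrow> moyal_elem U b \<Longrightarrow> x \<in> U \<Longrightarrow>
    mstar \<theta> (\<lambda>k y. a k y + b k y) c k x = mstar \<theta> a c k x + mstar \<theta> b c k x"
  by (simp add: moyal_elem_def mstar_bidiff bidiff_add_left distrib_left sum.distrib split_def)

lemma mstar_add_right:
  "moyal_elem U a \<Longrightarrow> moyal_elem U b \<Longrightarrow> x \<in> U \<Longrightarrow>
    mstar \<theta> c (\<lambda>k y. a k y + b k y) k x = mstar \<theta> c a k x + mstar \<theta> c b k x"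
  by (simp add: moyal_elem_def mstar_bidiff bidiff_add_right distrib_left sum.distrib split_def)

lemma mpd_mstar:
  assumes a: "moyal_elem U a" and b: "moyal_elem U b" and x: "x \<in> U"
  shows "pd i (mstar \<theta> a b k) x = mstar \<theta> (mpd i a) b k x + mstar \<theta> a (mpd i b) k x"
proof -
  have "pd i (mstar \<theta> a b k) x = (\<Sum>t\<in>triples k. pd i (mterm \<theta> a b t) x)"
    using pds_sum[OF finite_triples smooth_mterm[OF a b] x, of "[i]"] by (simp add: mstar_mterm)
  also have "\<dots> = mstar \<theta> (mpd i a) b k x + mstar \<theta> a (mpd i b) k x"
    using a b
    by (simp add: mstar_bidiff mterm_def split_def mpd_def moyal_elem_def pd_divide smooth_bidiff
        pd_bidiff x add_divide_distrib sum.distrib)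
  finally show ?thesis .
qed

lemma mstar_cong:
  assumes "\<And>k y. y \<in> U \<Longrightarrow> a k y = a' k y" "\<And>k y. y \<in> U \<Longrightarrow> b k y = b' k y" "x \<in> U"
  shows "mstar \<theta> a b k x = mstar \<theta> a' b' k x"
proof -
  have "pds ks (a p) x = pds ks (a' p) x" "pds ks (b p) x = pds ks (b' p) x" for ks p
    by (rule pds_cong; use assms in auto)+
  then show ?thesis by (simp add: mstar_def)
qed

lemma mpd_cong:
  assumes "\<And>k y. y \<in> U \<Longrightarrow> a k y = a' k y" "x \<in> U"
  shows "mpd i a k x = mpd i a' k x"
  unfolding mpd_def by (rule pd_cong) (use assms in auto)

end

section \<open>The Moyal algebra on \<open>U\<close> as a differential algebra\<close>

text \<open>Series are only meaningful on \<open>U\<close>.  Restricting every series to \<open>U\<close> (zero outside)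
  turns equality on \<open>U\<close> into equality of functions, so the Moyal product, the unit and the
  partial derivatives followed by restriction form a differential algebra whose carrier consists of
  the smooth series vanishing outside \<open>U\<close>.\<close>

definition restr :: "(real^'n::finite) set \<Rightarrow> 'n moyal \<Rightarrow> 'n moyal" where
  "restr U a = (\<lambda>k x. if x \<in> U then a k x else 0)"

definition elem_on :: "(real^'n::finite) set \<Rightarrow> 'n moyal \<Rightarrow> bool" where
  "elem_on U a \<longleftrightarrow> moyal_elem U a \<and> (\<forall>k x. x \<notin> U \<longrightarrow> a k x = 0)"

definition star_on :: "(real^'n::finite) set \<Rightarrow> real^'n^'n \<Rightarrow> 'n moyal \<Rightarrow> 'n moyal \<Rightarrow> 'n moyal" where
  "star_on U \<theta> a b = restr U (mstar \<theta> a b)"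

definition one_on :: "(real^'n::finite) set \<Rightarrow> 'n moyal" where
  "one_on U = restr U mone"

definition pd_on :: "(real^'n::finite) set \<Rightarrow> 'n \<Rightarrow> 'n moyal \<Rightarrow> 'n moyal" where
  "pd_on U i a = restr U (mpd i a)"

definition halve :: "'n::finite moyal \<Rightarrow> 'n moyal" where
  "halve a = mscale (1/2) a"

lemma restr_eqI: "(\<And>k x. x \<in> U \<Longrightarrow> a k x = b k x) \<Longrightarrow> restr U a = restr U b"
  by (simp add: restr_def fun_eq_iff)

lemma meq_iff_restr: "meq U a b \<longleftrightarrow> restr U a = restr U b"
  by (auto simp: meq_def restr_def fun_eq_iff)

lemma elem_on_restr_eq: "elem_on U a \<Longrightarrow> restr U a = a"
  by (auto simp: elem_on_def restr_def fun_eq_iff)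

lemma restr_madd: "restr U (madd a b) = restr U a + restr U b"
  by (auto simp: fun_eq_iff restr_def madd_def)

lemma restr_mneg: "restr U (mneg a) = - restr U a"
  by (auto simp: fun_eq_iff restr_def mneg_def)

lemma restr_mdiff: "restr U (mdiff a b) = restr U a - restr U b"
  by (auto simp: fun_eq_iff restr_def mdiff_def madd_def mneg_def)

lemma restr_add: "restr U a + restr U b = restr U (\<lambda>k x. a k x + b k x)"
  by (auto simp: fun_eq_iff restr_def)

lemma restr_halve: "restr U (mscale (1/2) a) = halve (restr U a)"
  by (auto simp: fun_eq_iff restr_def halve_def mscale_def)

lemma sum_moyal_apply: "sum g I k x = (\<Sum>i\<in>I. (g i :: 'n::finite moyal) k x)"
  by (induction I rule: infinite_finite_induct) auto

lemma restr_msum: "restr U (msum I f) = (\<Sum>i\<in>I. restr U (f i))"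
  by (auto simp: fun_eq_iff restr_def msum_def sum_moyal_apply)

lemma restr_mone: "restr U mone = one_on U"
  by (simp add: one_on_def)

lemma restr_mzero: "restr U mzero = 0"
  by (auto simp: fun_eq_iff restr_def mzero_def)

lemma halve_add: "halve (a + b) = halve a + halve b"
  by (simp add: halve_def mscale_def fun_eq_iff algebra_simps)

lemma halve_twice: "halve a + halve a = a"
  by (simp add: halve_def mscale_def fun_eq_iff)

context
  fixes U :: "(real^'n::finite) set"
  assumes U: "open U"
begin

lemma moyal_elem_restr: "moyal_elem U (restr U a) \<longleftrightarrow> moyal_elem U a"
proof -
  have "smooth_on U (restr U a k) \<longleftrightarrow> smooth_on U (a k)" for k
    using smooth_cong[OF U, of "restr U a k" "a k"] smooth_cong[OF U, of "a k" "restr U a k"]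
    by (auto simp: restr_def)
  then show ?thesis by (simp add: moyal_elem_def)
qed

lemma elem_on_restr: "moyal_elem U a \<Longrightarrow> elem_on U (restr U a)"
  by (simp add: elem_on_def moyal_elem_restr) (simp add: restr_def)

lemma mstar_restr_left: "x \<in> U \<Longrightarrow> mstar \<theta> (restr U a) b k x = mstar \<theta> a b k x"
  by (rule mstar_cong[OF U]) (auto simp: restr_def)

lemma mstar_restr_right: "x \<in> U \<Longrightarrow> mstar \<theta> a (restr U b) k x = mstar \<theta> a b k x"
  by (rule mstar_cong[OF U]) (auto simp: restr_def)

lemma mpd_restr: "x \<in> U \<Longrightarrow> mpd i (restr U a) k x = mpd i a k x"
  by (rule mpd_cong[OF U]) (auto simp: restr_def)

lemma restr_mstar: "restr U (mstar \<theta> a b) = star_on U \<theta> (restr U a) (restr U b)"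
  unfolding star_on_def by (rule restr_eqI) (simp add: mstar_restr_left mstar_restr_right)

lemma restr_mpd: "restr U (mpd i a) = pd_on U i (restr U a)"
  unfolding pd_on_def by (rule restr_eqI) (simp add: mpd_restr)

lemma elem_on_smooth: "elem_on U a \<Longrightarrow> smooth_on U (a k)"
  by (simp add: elem_on_def moyal_elem_def)

lemma elem_on_add: "elem_on U a \<Longrightarrow> elem_on U b \<Longrightarrow> elem_on U (a + b)"
  using smooth_add[OF U] by (auto simp: elem_on_def moyal_elem_def plus_fun_def)

lemma elem_on_uminus: "elem_on U a \<Longrightarrow> elem_on U (- a)"
  using smooth_cmult[OF U, of "a k" "-1" for k]
  by (auto simp: elem_on_def moyal_elem_def fun_Compl_def)

lemma elem_on_zero: "elem_on U 0"
  using smooth_const[OF U, of 0] by (simp add: elem_on_def moyal_elem_def zero_fun_def)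

lemma elem_on_star: "elem_on U a \<Longrightarrow> elem_on U b \<Longrightarrow> elem_on U (star_on U \<theta> a b)"
  unfolding star_on_def by (rule elem_on_restr, rule smooth_mstar[OF U]) (auto simp: elem_on_def)

lemma elem_on_one: "elem_on U (one_on U)"
  unfolding one_on_def by (rule elem_on_restr) (simp add: moyal_elem_def mone_def smooth_const[OF U])

lemma elem_on_pd: "elem_on U a \<Longrightarrow> elem_on U (pd_on U i a)"
  unfolding pd_on_def
  by (rule elem_on_restr) (auto simp: moyal_elem_def mpd_def elem_on_smooth intro!: smooth_pd[OF U])

lemma elem_on_halve: "elem_on U a \<Longrightarrow> elem_on U (halve a)"
  using smooth_cmult[OF U, of "a k" "1/2" for k]
  by (auto simp: elem_on_def moyal_elem_def halve_def mscale_def)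

lemma star_on_add_left:
  "elem_on U a \<Longrightarrow> elem_on U b \<Longrightarrow> elem_on U c \<Longrightarrow>
    star_on U \<theta> (a + b) c = star_on U \<theta> a c + star_on U \<theta> b c"
  by (auto simp: star_on_def elem_on_def restr_def fun_eq_iff plus_fun_def
      mstar_add_left[OF U, unfolded plus_fun_def])

lemma star_on_add_right:
  "elem_on U a \<Longrightarrow> elem_on U b \<Longrightarrow> elem_on U c \<Longrightarrow>
    star_on U \<theta> a (b + c) = star_on U \<theta> a b + star_on U \<theta> a c"
  by (auto simp: star_on_def elem_on_def restr_def fun_eq_iff plus_fun_def
      mstar_add_right[OF U, unfolded plus_fun_def])

lemma star_on_assoc:
  "elem_on U a \<Longrightarrow> elem_on U b \<Longrightarrow> elem_on U c \<Longrightarrow>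
    star_on U \<theta> (star_on U \<theta> a b) c = star_on U \<theta> a (star_on U \<theta> b c)"
  unfolding star_on_def
  by (rule restr_eqI) (simp add: mstar_restr_left mstar_restr_right mstar_assoc[OF U] elem_on_def)

lemma star_on_one_left: "elem_on U a \<Longrightarrow> star_on U \<theta> (one_on U) a = a"
  unfolding star_on_def one_on_def
  by (subst elem_on_restr_eq[symmetric], assumption, rule restr_eqI)
    (simp add: mstar_restr_left mstar_one_left)

lemma star_on_one_right: "elem_on U a \<Longrightarrow> star_on U \<theta> a (one_on U) = a"
  unfolding star_on_def one_on_def
  by (subst elem_on_restr_eq[symmetric], assumption, rule restr_eqI)
    (simp add: mstar_restr_right mstar_one_right)

lemma pd_on_add: "elem_on U a \<Longrightarrow> elem_on U b \<Longrightarrow> pd_on U i (a + b) = pd_on U i a + pd_on U i b"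
  unfolding pd_on_def restr_def
  by (auto simp: fun_eq_iff mpd_def plus_fun_def elem_on_smooth
      intro!: pd_exists_add[THEN conjunct2] smooth_pd_exists0[OF U])

lemma pd_on_star:
  assumes "elem_on U a" and "elem_on U b"
  shows "pd_on U i (star_on U \<theta> a b) = star_on U \<theta> (pd_on U i a) b + star_on U \<theta> a (pd_on U i b)"
proof -
  have ab: "moyal_elem U a" "moyal_elem U b"
    using assms by (simp_all add: elem_on_def)
  have "pd_on U i (star_on U \<theta> a b) = restr U (\<lambda>k x. mstar \<theta> (mpd i a) b k x + mstar \<theta> a (mpd i b) k x)"
    unfolding pd_on_def star_on_def
    by (rule restr_eqI) (simp add: mpd_restr, simp add: mpd_def[of i "mstar \<theta> a b"] mpd_mstar[OF U ab])
  also have "\<dots> = restr U (\<lambda>k x. mstar \<theta> (pd_on U i a) b k x + mstar \<theta> a (pd_on U i b) k x)"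
    by (rule restr_eqI) (simp add: pd_on_def mstar_restr_left mstar_restr_right)
  finally show ?thesis by (simp add: star_on_def restr_add)
qed

lemma pd_on_commute: "elem_on U a \<Longrightarrow> pd_on U i (pd_on U j a) = pd_on U j (pd_on U i a)"
  unfolding pd_on_def
  by (rule restr_eqI) (simp add: mpd_restr, simp add: mpd_def pd_commute[OF U] elem_on_smooth)

lemma moyal_diff_algebra: "diff_algebra (elem_on U) (star_on U \<theta>) (one_on U) (pd_on U) halve"
  by unfold_locales
    (simp_all add: elem_on_add elem_on_uminus elem_on_zero elem_on_star elem_on_one elem_on_pd
      elem_on_halve star_on_add_left star_on_add_right star_on_assoc star_on_one_left
      star_on_one_right pd_on_add pd_on_star pd_on_commute halve_add halve_twice)

end

locale moyal_nc_space =
  fixes U :: "(real^'n::finite) set" and \<theta> :: "real^'n^'n"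
    and X :: "'m::finite \<Rightarrow> 'n moyal" and G :: "'n \<Rightarrow> 'n \<Rightarrow> 'n moyal"
  assumes open_U: "open U" and nc_space: "nc_space U \<theta> X G"
begin

lemma restr_metric_jacobian:
  "restr U (metric \<theta> X i j) = (\<Sum>\<alpha>\<in>UNIV. star_on U \<theta> (pd_on U i (restr U (X \<alpha>))) (pd_on U j (restr U (X \<alpha>))))"
  by (simp add: metric_def restr_msum restr_mstar[OF open_U] restr_mpd[OF open_U])

lemma restr_metric_inverse:
  "(\<Sum>l\<in>UNIV. star_on U \<theta> (restr U (metric \<theta> X i l)) (restr U (G l j))) = (if i = j then one_on U else 0)"
  "(\<Sum>l\<in>UNIV. star_on U \<theta> (restr U (G i l)) (restr U (metric \<theta> X l j))) = (if i = j then one_on U else 0)"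
  using nc_space unfolding nc_space_def is_metric_inverse_def meq_iff_restr matmat_def
  by (simp_all add: restr_msum restr_mstar[OF open_U] restr_mone restr_mzero)

end

sublocale moyal_nc_space \<subseteq> M: embedded_space "elem_on U" "star_on U \<theta>" "one_on U" "pd_on U" halve
  "\<lambda>\<alpha>. restr U (X \<alpha>)" "\<lambda>i j. restr U (G i j)"
proof -
  interpret diff_algebra "elem_on U" "star_on U \<theta>" "one_on U" "pd_on U" halve
    by (rule moyal_diff_algebra[OF open_U])
  have elem: "moyal_elem U (X \<alpha>)" "moyal_elem U (G i j)" for \<alpha> i j
    using nc_space by (auto simp: nc_space_def is_metric_inverse_def)
  show "embedded_space (elem_on U) (star_on U \<theta>) (one_on U) (pd_on U) halve
      (\<lambda>\<alpha>. restr U (X \<alpha>)) (\<lambda>i j. restr U (G i j))"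
    by unfold_locales
      (use restr_metric_inverse in \<open>simp_all add: elem_on_restr[OF open_U] elem mat_elem_def
        mat_mult_def mat_transp_def mat_one_def jacobian_def restr_metric_jacobian fun_eq_iff\<close>)
qed

context moyal_nc_space
begin

subsection \<open>Dictionary between the series of \<open>Defs\<close> and the matrices of the locale\<close>

lemma restr_Evec: "restr U (Evec X k \<alpha>) = M.E k \<alpha>"
  by (simp add: Evec_def restr_mpd[OF open_U] M.jacobian_def)

lemma restr_metric: "restr U (metric \<theta> X i j) = M.gmat i j"
  by (simp add: restr_metric_jacobian M.gmat_def M.mat_mult_def M.mat_transp_def M.jacobian_def)

lemma restr_Etil: "restr U (Etil \<theta> X G i \<alpha>) = M.Edual \<alpha> i"
  by (simp add: Etil_def restr_msum restr_mstar[OF open_U] restr_Evec M.Edual_def M.mat_mult_def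
      M.mat_transp_def)

lemma restr_dproj: "restr U (dproj \<theta> X G i \<alpha> \<beta>) = M.de i \<alpha> \<beta>"
  by (simp add: dproj_def proj_def restr_mpd[OF open_U] restr_msum restr_mstar[OF open_U]
      restr_Etil restr_Evec M.de_def M.emat_def M.mat_D_def M.mat_mult_def)

lemma restr_Riem: "restr U (Riem \<theta> X G l k i j) = M.Riemann i j k l"
  by (simp add: Riem_def curv_def rowcol_def rowmat_def matmat_def restr_msum restr_mstar[OF open_U]
      restr_mneg restr_mdiff restr_Evec restr_Etil restr_dproj M.Riemann_def M.curvature_def
      M.mat_mult_def)

lemma restr_Riemtil: "restr U (Riemtil \<theta> X G l k i j) = M.Riemann_dual i j l k"
  by (simp add: Riemtil_def restr_mneg restr_msum restr_mstar[OF open_U] restr_metric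
      restr_Riem[unfolded Riem_def] M.Riemann_dual_apply)

text \<open>\<open>\<Gamma>\<^sub>i\<^sub>j\<^sub>l = \<^sub>c\<Gamma>\<^sub>i\<^sub>j\<^sub>l + \<Upsilon>\<^sub>i\<^sub>j\<^sub>l\<close> and \<open>\<tilde>\<Gamma>\<^sub>i\<^sub>j\<^sub>l = \<^sub>c\<Gamma>\<^sub>i\<^sub>j\<^sub>l - \<Upsilon>\<^sub>i\<^sub>j\<^sub>l\<close> are the two halves of the
  metric combination of \<open>metric_Christoffel_combination\<close>.\<close>

lemma restr_cGamma_Upsilon:
  "restr U (cGamma \<theta> X i j l) = halve (M.Gamma_low i j l + M.Gamma_dual_low i l j)"
  "restr U (Upsilon \<theta> X i j l) = halve (M.Gamma_low i j l - M.Gamma_dual_low i l j)"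
  by (simp_all add: cGamma_def Upsilon_def restr_halve restr_mdiff restr_madd restr_mpd[OF open_U]
      restr_metric M.metric_Christoffel_combination rowcol_def restr_msum restr_mstar[OF open_U]
      restr_Evec M.Gamma_low_def M.Gamma_dual_low_def M.mat_mult_def M.mat_D_def M.mat_transp_def)

lemma restr_Gam: "restr U (Gam \<theta> X G k i j) = M.Gamma i j k"
  by (simp add: Gam_def Gamma3_def restr_msum restr_mstar[OF open_U] restr_madd restr_cGamma_Upsilon
      M.half_sum_add_half_diff M.Gamma_raise M.mat_mult_def)

lemma restr_Gamtil: "restr U (Gamtil \<theta> X G k i j) = M.Gamma_dual i k j"
  by (simp add: Gamtil_def Gamma3til_def restr_msum restr_mstar[OF open_U] restr_mdiff
      restr_cGamma_Upsilon M.half_sum_diff_half_diff M.Gamma_dual_raise M.mat_mult_def)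

lemma restr_nabla:
  "restr U (nabla \<theta> X G i \<zeta> \<beta>)
     = pd_on U i (restr U (\<zeta> \<beta>)) - (\<Sum>\<alpha>\<in>UNIV. star_on U \<theta> (restr U (\<zeta> \<alpha>)) (M.de i \<alpha> \<beta>))"
  by (simp add: nabla_def rowmat_def restr_mdiff restr_mpd[OF open_U] restr_msum
      restr_mstar[OF open_U] restr_dproj)

lemma restr_nablatil:
  "restr U (nablatil \<theta> X G i \<xi> \<alpha>)
     = pd_on U i (restr U (\<xi> \<alpha>)) - (\<Sum>\<beta>\<in>UNIV. star_on U \<theta> (M.de i \<alpha> \<beta>) (restr U (\<xi> \<beta>)))"
  by (simp add: nablatil_def matcol_def restr_mdiff restr_mpd[OF open_U] restr_msum
      restr_mstar[OF open_U] restr_dproj)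

lemma Riem_Gam:
  "meq U (Riem \<theta> X G l k i j)
     (madd (madd (mdiff (mneg (mpd j (Gam \<theta> X G l i k)))
                        (msum UNIV (\<lambda>p. mstar \<theta> (Gam \<theta> X G p i k) (Gam \<theta> X G l j p))))
                 (mpd i (Gam \<theta> X G l j k)))
           (msum UNIV (\<lambda>p. mstar \<theta> (Gam \<theta> X G p j k) (Gam \<theta> X G l i p))))"
  using fun_cong[OF fun_cong[OF M.Riemann_Gamma[of i j]], of k l]
  by (simp add: meq_iff_restr restr_madd restr_mdiff restr_mneg restr_mpd[OF open_U] restr_msum
      restr_mstar[OF open_U] restr_Riem restr_Gam M.mat_D_def M.mat_mult_def)

lemma Riemtil_Gamtil:
  "meq U (Riemtil \<theta> X G l k i j)
     (madd (madd (mdiff (mneg (mpd j (Gamtil \<theta> X G l i k)))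
                        (msum UNIV (\<lambda>p. mstar \<theta> (Gamtil \<theta> X G l j p) (Gamtil \<theta> X G p i k))))
                 (mpd i (Gamtil \<theta> X G l j k)))
           (msum UNIV (\<lambda>p. mstar \<theta> (Gamtil \<theta> X G l i p) (Gamtil \<theta> X G p j k))))"
  using fun_cong[OF fun_cong[OF M.Riemann_dual_Gamma_dual[of i j]], of l k]
  by (simp add: meq_iff_restr restr_madd restr_mdiff restr_mneg restr_mpd[OF open_U] restr_msum
      restr_mstar[OF open_U] restr_Riemtil restr_Gamtil M.mat_D_def M.mat_mult_def)

lemma nabla_commutator:
  "meq U (mdiff (nabla \<theta> X G i (nabla \<theta> X G j (Evec X k)) \<beta>)
                (nabla \<theta> X G j (nabla \<theta> X G i (Evec X k)) \<beta>))
         (msum UNIV (\<lambda>l. mstar \<theta> (Riem \<theta> X G l k i j) (Evec X l \<beta>)))"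
  using fun_cong[OF fun_cong[OF M.nabla_row_commutator[of i j]], of k \<beta>]
  by (simp add: meq_iff_restr restr_mdiff restr_nabla restr_msum restr_mstar[OF open_U] restr_Riem
      restr_Evec M.nabla_row_def M.mat_D_def M.mat_mult_def)

lemma nablatil_commutator:
  "meq U (mdiff (nablatil \<theta> X G i (nablatil \<theta> X G j (Evec X k)) \<alpha>)
                (nablatil \<theta> X G j (nablatil \<theta> X G i (Evec X k)) \<alpha>))
         (msum UNIV (\<lambda>l. mstar \<theta> (Evec X l \<alpha>) (Riemtil \<theta> X G l k i j)))"
  using fun_cong[OF fun_cong[OF M.nabla_col_commutator[of i j]], of \<alpha> k]
  by (simp add: meq_iff_restr restr_mdiff restr_nablatil restr_msum restr_mstar[OF open_U]
      restr_Riemtil restr_Evec M.nabla_col_def M.mat_D_def M.mat_mult_def M.mat_transp_def)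

end

text \<open>The theorem of the paper.\<close>

theorem mainTheorem13:
  fixes U :: "(real^'n::finite) set"
    and \<theta> :: "real^'n^'n"
    and X :: "'m::finite \<Rightarrow> 'n moyal"
    and G :: "'n \<Rightarrow> 'n \<Rightarrow> 'n moyal"
  assumes "open U"
    and "\<forall>i j. \<theta> $ i $ j = - \<theta> $ j $ i"
    and "nc_space U \<theta> X G"
  shows
    "(\<forall>l k i j. meq U (Riem \<theta> X G l k i j)
       (madd (madd (mdiff (mneg (mpd j (Gam \<theta> X G l i k)))
                            (msum UNIV (\<lambda>p. mstar \<theta> (Gam \<theta> X G p i k) (Gam \<theta> X G l j p))))
                    (mpd i (Gam \<theta> X G l j k)))
             (msum UNIV (\<lambda>p. mstar \<theta> (Gam \<theta> X G p j k) (Gam \<theta> X G l i p)))))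
    \<and>
    (\<forall>l k i j. meq U (Riemtil \<theta> X G l k i j)
       (madd (madd (mdiff (mneg (mpd j (Gamtil \<theta> X G l i k)))
                            (msum UNIV (\<lambda>p. mstar \<theta> (Gamtil \<theta> X G l j p) (Gamtil \<theta> X G p i k))))
                    (mpd i (Gamtil \<theta> X G l j k)))
             (msum UNIV (\<lambda>p. mstar \<theta> (Gamtil \<theta> X G l i p) (Gamtil \<theta> X G p j k)))))
    \<and>
    (\<forall>k i j \<beta>. meq U
       (mdiff (nabla \<theta> X G i (nabla \<theta> X G j (Evec X k)) \<beta>)
              (nabla \<theta> X G j (nabla \<theta> X G i (Evec X k)) \<beta>))
       (msum UNIV (\<lambda>l. mstar \<theta> (Riem \<theta> X G l k i j) (Evec X l \<beta>))))
    \<and>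
    (\<forall>k i j \<alpha>. meq U
       (mdiff (nablatil \<theta> X G i (nablatil \<theta> X G j (Evec X k)) \<alpha>)
              (nablatil \<theta> X G j (nablatil \<theta> X G i (Evec X k)) \<alpha>))
       (msum UNIV (\<lambda>l. mstar \<theta> (Evec X l \<alpha>) (Riemtil \<theta> X G l k i j))))"
proof -
  interpret moyal_nc_space U \<theta> X G
    using assms(1,3) by unfold_locales
  show ?thesis
    using Riem_Gam Riemtil_Gamtil nabla_commutator nablatil_commutator by blast
qed

end
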